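(* Let $p$ be a prime and $v$ the $p$-adic valuation. Let $a_{00},a_{01},a_{02},a_{10},a_{11},a_{20}\in\mathbb{Z}_p$ be fixed with $v(a_{00})\ge 2$, $v(a_{01})\ge 2$, $v(a_{02})=1$, $v(a_{10})\ge 1$, $v(a_{11})\ge 1$, $v(a_{20})=0$. Let $$\mathcal S=\Big\{\sum_{i,j=0}^2a_{ij}X_0^{2-i}X_1^iY_0^{2-j}Y_1^j:\ a_{12}\in p\mathbb{Z}_p,\ a_{21}\in\mathbb{Z}_p,\ a_{22}\in\mathbb{Z}_p\Big\},$$ with $(a_{12},a_{21},a_{22})$ distributed according to the Haar probability measure on $p\mathbb{Z}_p\times\mathbb{Z}_p\times\mathbb{Z}_p$. Then the proportion of polynomials $F\in\mathcal S$ having a zero $(X_0,X_1,Y_0,Y_1)\in\mathbb{Z}_p^4$ with $p\nmid X_1Y_1$ is $1/2$. *)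

theory Defs
  imports "HOL-Probability.Probability"
begin

text \<open>p-adic integers are represented by their base-p digit sequences:
  a = sum_i d_i p^i with 0 <= d_i < p.  The ring structure is the inverse-limit
  one: an element is determined by its truncations modulo p^n.\<close>

definition Zp :: "nat \<Rightarrow> (nat \<Rightarrow> nat) set" where
  "Zp p = {d. \<forall>i. d i < p}"

definition zp_trunc :: "nat \<Rightarrow> (nat \<Rightarrow> nat) \<Rightarrow> nat \<Rightarrow> int" where
  "zp_trunc p d n = (\<Sum>i<n. int (d i) * int p ^ i)"

definition zp_val :: "(nat \<Rightarrow> nat) \<Rightarrow> enat" where
  "zp_val d = (if \<forall>i. d i = 0 then \<infinity> else enat (LEAST i. d i \<noteq> 0))"

text \<open>Multiplication by p (shift of digits); it maps Z_p bijectively onto pZ_p.\<close>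
definition zp_mult_p :: "(nat \<Rightarrow> nat) \<Rightarrow> nat \<Rightarrow> nat" where
  "zp_mult_p d = (\<lambda>i. if i = 0 then 0 else d (i - 1))"

definition zp_haar :: "nat \<Rightarrow> (nat \<Rightarrow> nat) measure" where
  "zp_haar p = PiM UNIV (\<lambda>_. uniform_count_measure {0..<p})"

definition bihom_eval ::
  "nat \<Rightarrow> (nat \<Rightarrow> nat \<Rightarrow> (nat \<Rightarrow> nat)) \<Rightarrow> (nat \<Rightarrow> nat) \<Rightarrow> (nat \<Rightarrow> nat)
     \<Rightarrow> (nat \<Rightarrow> nat) \<Rightarrow> (nat \<Rightarrow> nat) \<Rightarrow> nat \<Rightarrow> int" where
  "bihom_eval p A X0 X1 Y0 Y1 n =
     (\<Sum>i\<le>2. \<Sum>j\<le>2. zp_trunc p (A i j) n * zp_trunc p X0 n ^ (2 - i) * zp_trunc p X1 n ^ i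
                      * zp_trunc p Y0 n ^ (2 - j) * zp_trunc p Y1 n ^ j)"

text \<open>F has a zero (X0,X1,Y0,Y1) in Z_p^4 with p not dividing X1*Y1.
  F(x) = 0 in Z_p iff F(x) = 0 mod p^n for all n.\<close>
definition has_primitive_zero :: "nat \<Rightarrow> (nat \<Rightarrow> nat \<Rightarrow> (nat \<Rightarrow> nat)) \<Rightarrow> bool" where
  "has_primitive_zero p A =
     (\<exists>X0\<in>Zp p. \<exists>X1\<in>Zp p. \<exists>Y0\<in>Zp p. \<exists>Y1\<in>Zp p.
        \<not> (int p dvd zp_trunc p X1 1 * zp_trunc p Y1 1) \<and>
        (\<forall>n. int p ^ n dvd bihom_eval p A X0 X1 Y0 Y1 n))"

definition coef22 ::
  "(nat \<Rightarrow> nat) \<Rightarrow> (nat \<Rightarrow> nat) \<Rightarrow> (nat \<Rightarrow> nat) \<Rightarrow> (nat \<Rightarrow> nat) \<Rightarrow> (nat \<Rightarrow> nat)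
   \<Rightarrow> (nat \<Rightarrow> nat) \<Rightarrow> (nat \<Rightarrow> nat) \<Rightarrow> (nat \<Rightarrow> nat) \<Rightarrow> (nat \<Rightarrow> nat)
   \<Rightarrow> nat \<Rightarrow> nat \<Rightarrow> (nat \<Rightarrow> nat)" where
  "coef22 a00 a01 a02 a10 a11 a12 a20 a21 a22 i j =
     (if i = 0 then (if j = 0 then a00 else if j = 1 then a01 else a02)
      else if i = 1 then (if j = 0 then a10 else if j = 1 then a11 else a12)
      else (if j = 0 then a20 else if j = 1 then a21 else a22))"

end

theory Submission
  imports Defs
begin

text \<open>
  In the coordinates \<open>x = X\<^sub>0 / X\<^sub>1\<close>, \<open>y = Y\<^sub>0 / Y\<^sub>1\<close> the form is congruent modulo \<open>p\<close> to the
  quadratic \<open>a\<^sub>2\<^sub>0 y\<^sup>2 + a\<^sub>2\<^sub>1 y + a\<^sub>2\<^sub>2\<close>, whose leading coefficient is a unit. A simple root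
  lifts to a zero by Hensel's lemma, and without a root there is no primitive zero. At a double root
  \<open>r\<close> substitute \<open>y = r + p u\<close> and divide by \<open>p\<close>: the result has the same shape with the roles of
  \<open>x\<close> and \<open>y\<close> exchanged, and its free coefficients are again Haar distributed. Of the \<open>p\<^sup>2\<close>
  residue pairs \<open>(a\<^sub>2\<^sub>1, a\<^sub>2\<^sub>2)\<close>, \<open>(p\<^sup>2 - p) / 2\<close> give a simple root and \<open>p\<close> a double root, so the
  probability \<open>\<rho>\<close> of a zero satisfies \<open>\<rho> = (p - 1) / (2 p) + \<rho> / p\<close>, that is \<open>\<rho> = 1 / 2\<close>.
  Concretely, the coefficients that survive \<open>m\<close> steps of this descent form a set of measure
  \<open>1 / 2 + p\<^sup>-\<^sup>m / 2\<close>, and these sets decrease to the set of forms with a primitive zero.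
\<close>

section \<open>Coherent sequences\<close>

lemma dvd_diff_imp_dvd_iff: "(m::int) dvd a - b \<Longrightarrow> m dvd a \<longleftrightarrow> m dvd b"
  by (metis diff_add_cancel dvd_add_left_iff dvd_add_right_iff)

lemma dvd_diff_trans: "(m::int) dvd a - b \<Longrightarrow> m dvd b - c \<Longrightarrow> m dvd a - c"
  using dvd_add[of m "a - b" "b - c"] by simp

lemma dvd_diff_mult: "(m::int) dvd a - a' \<Longrightarrow> m dvd b - b' \<Longrightarrow> m dvd a * b - a' * b'"
proof -
  assume "m dvd a - a'" "m dvd b - b'"
  then have "m dvd a * (b - b') + b' * (a - a')" by simp
  then show ?thesis by (simp add: algebra_simps)
qed

lemma dvd_diff_power: "(m::int) dvd a - a' \<Longrightarrow> m dvd a ^ k - a' ^ k"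
  by (induction k) (simp_all add: dvd_diff_mult)

lemma dvd_diff_mod: "(m::int) dvd n \<Longrightarrow> m dvd a - a mod n"
  by (metis dvd_mult2 minus_mod_eq_mult_div)

lemma dvd_diff_imp_eq:
  fixes p y r :: int
  assumes "y \<in> {0..<p}" "r \<in> {0..<p}" "p dvd y - r"
  shows "y = r"
  using assms mod_eq_dvd_iff[of y p r] by simp

lemma prime_inverse_mod:
  fixes p a :: int
  assumes "prime p" "\<not> p dvd a"
  obtains a' l where "a * a' = 1 + p * l"
proof -
  have "coprime p a"
    using assms prime_imp_coprime by blast
  then have "gcd a p = 1"
    by (simp add: coprime_iff_gcd_eq_1 gcd.commute)
  with bezout_coefficients_fst_snd[of a p]
  have "a * fst (bezout_coefficients a p) = 1 + p * (- snd (bezout_coefficients a p))"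
    by (simp add: algebra_simps)
  then show ?thesis using that by blast
qed

text \<open>An element of \<open>\<int>\<^sub>p\<close> is handled through a sequence of integers \<open>s n\<close>, the
  \<open>n\<close>-th one being its residue modulo \<open>p ^ n\<close>.\<close>

definition coherent :: "int \<Rightarrow> (nat \<Rightarrow> int) \<Rightarrow> bool" where
  "coherent p s \<longleftrightarrow> (\<forall>j k. j \<le> k \<longrightarrow> p ^ j dvd s k - s j)"

lemma coherentD: "coherent p s \<Longrightarrow> j \<le> k \<Longrightarrow> p ^ j dvd s k - s j"
  unfolding coherent_def by blast

lemma coherentI:
  assumes succ: "\<And>n. p ^ n dvd s (Suc n) - s n"
  shows "coherent p s"
  unfolding coherent_def
proof (intro allI impI)
  fix j k :: nat
  assume "j \<le> k"
  then show "p ^ j dvd s k - s j"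
  proof (induction rule: dec_induct)
    case (step k)
    have "p ^ j dvd s (Suc k) - s k"
      using succ[of k] dvd_trans le_imp_power_dvd[OF \<open>j \<le> k\<close>] by blast
    with step.IH show ?case by (rule dvd_diff_trans[rotated])
  qed simp
qed

lemma coherent_const: "coherent p (\<lambda>n. c)"
  unfolding coherent_def by simp

lemma coherent_add: "coherent p a \<Longrightarrow> coherent p b \<Longrightarrow> coherent p (\<lambda>n. a n + b n)"
  unfolding coherent_def by (metis add_diff_add dvd_add)

lemma coherent_cmult: "coherent p a \<Longrightarrow> coherent p (\<lambda>n. c * a n)"
  unfolding coherent_def by (metis dvd_mult right_diff_distrib)

lemma coherent_mult: "coherent p a \<Longrightarrow> coherent p b \<Longrightarrow> coherent p (\<lambda>n. a n * b n)"
  unfolding coherent_def by (blast intro: dvd_diff_mult)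

lemma coherent_Suc: "coherent p s \<Longrightarrow> coherent p (\<lambda>n. s (Suc n))"
  unfolding coherent_def by (meson Suc_le_mono dvd_trans le_imp_power_dvd le_SucI order_refl)

lemma coherent_div:
  assumes "p \<noteq> 0" "coherent p s" "\<And>n. p dvd s (Suc n)"
  shows "coherent p (\<lambda>n. s (Suc n) div p)"
  unfolding coherent_def
proof (intro allI impI)
  fix j k :: nat
  assume "j \<le> k"
  obtain a b where ab: "s (Suc k) = p * a" "s (Suc j) = p * b"
    using assms(3) by (meson dvdE)
  have "p * p ^ j dvd p * (a - b)"
    using coherentD[OF assms(2), of "Suc j" "Suc k"] \<open>j \<le> k\<close> by (simp add: ab right_diff_distrib)
  then show "p ^ j dvd s (Suc k) div p - s (Suc j) div p"
    using assms(1) by (simp add: ab)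
qed

lemma coherent_dvd_propagate:
  assumes "coherent p s" "p dvd s k" "1 \<le> k" "1 \<le> n"
  shows "p dvd s n"
proof -
  have "p dvd s k - s 1" "p dvd s n - s 1"
    using coherentD[OF assms(1)] assms(3,4) by (metis power_one_right)+
  then show ?thesis
    using assms(2) dvd_diff_imp_dvd_iff dvd_diff_trans dvd_diff_commute by metis
qed

lemma coherent_inverse:
  fixes p :: int
  assumes p: "prime p" and u: "coherent p u" and unit: "\<not> p dvd u 1"
  obtains v where "coherent p v" "\<And>n. p ^ n dvd u n * v n - 1"
proof -
  have "\<exists>v. p ^ n dvd u n * v - 1" for n
  proof (cases "n = 0")
    case False
    then have "p dvd u n - u 1"
      using coherentD[OF u, of 1 n] by simp
    then have "\<not> p dvd u n"
      using unit dvd_diff_imp_dvd_iff by blast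
    then have "coprime (u n) (p ^ n)"
      using p prime_imp_coprime coprime_commute by (metis coprime_power_right_iff)
    then have "gcd (u n) (p ^ n) = 1"
      by (simp add: coprime_iff_gcd_eq_1)
    with bezout_coefficients_fst_snd[of "u n" "p ^ n"]
    have "u n * fst (bezout_coefficients (u n) (p ^ n)) - 1
        = p ^ n * (- snd (bezout_coefficients (u n) (p ^ n)))"
      by (simp add: algebra_simps)
    then show ?thesis by (metis dvdI)
  qed simp
  then obtain v where v: "\<And>n. p ^ n dvd u n * v n - 1"
    by metis
  have "coherent p v"
  proof (rule coherentI)
    fix n
    have "p ^ n dvd u (Suc n) * v (Suc n) - 1"
      using v[of "Suc n"] dvd_trans le_imp_power_dvd[of n "Suc n" p] by auto
    moreover have "p ^ n dvd u (Suc n) - u n"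
      using coherentD[OF u, of n "Suc n"] by simp
    ultimately have "p ^ n dvd (u (Suc n) * v (Suc n) - 1) - v (Suc n) * (u (Suc n) - u n)"
      by simp
    then have "p ^ n dvd u n * v (Suc n) - 1"
      by (simp add: algebra_simps)
    then have "p ^ n dvd v (Suc n) * (1 - u n * v n) + v n * (u n * v (Suc n) - 1)"
      using v[of n] by (simp add: dvd_diff_commute)
    then show "p ^ n dvd v (Suc n) - v n"
      by (simp add: algebra_simps)
  qed
  with v that show ?thesis by blast
qed

section \<open>Hensel's lemma\<close>

lemma hensel_lift:
  fixes p :: int and a t w :: "nat \<Rightarrow> int"
  assumes p: "prime p" and coh: "coherent p a" "coherent p t" "coherent p w" and n: "1 \<le> n"
    and root: "p ^ n dvd a n * z\<^sup>2 + t n * z + w n"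
    and simple: "\<not> p dvd 2 * a 1 * z + t 1"
  obtains k where "p ^ Suc n dvd a (Suc n) * (z + p ^ n * k)\<^sup>2 + t (Suc n) * (z + p ^ n * k) + w (Suc n)"
    and "\<not> p dvd 2 * a 1 * (z + p ^ n * k) + t 1"
proof -
  define q where "q z = a (Suc n) * z\<^sup>2 + t (Suc n) * z + w (Suc n)" for z
  define D where "D = 2 * a (Suc n) * z + t (Suc n)"
  have "p ^ n dvd q z - (a n * z\<^sup>2 + t n * z + w n)"
  proof -
    have "q z - (a n * z\<^sup>2 + t n * z + w n)
        = (a (Suc n) - a n) * z\<^sup>2 + (t (Suc n) - t n) * z + (w (Suc n) - w n)"
      unfolding q_def by (simp add: algebra_simps)
    also have "p ^ n dvd \<dots>"
      using coherentD[OF coh(1), of n "Suc n"] coherentD[OF coh(2), of n "Suc n"]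
        coherentD[OF coh(3), of n "Suc n"] by simp
    finally show ?thesis .
  qed
  with root obtain m where m: "q z = p ^ n * m"
    using dvd_diff_imp_dvd_iff by blast
  have "p dvd D - (2 * a 1 * z + t 1)"
  proof -
    have "D - (2 * a 1 * z + t 1) = 2 * z * (a (Suc n) - a 1) + (t (Suc n) - t 1)"
      unfolding D_def by (simp add: algebra_simps)
    also have "p dvd \<dots>"
      using coherentD[OF coh(1), of 1 "Suc n"] coherentD[OF coh(2), of 1 "Suc n"] by simp
    finally show ?thesis .
  qed
  with simple have "\<not> p dvd D"
    using dvd_diff_imp_dvd_iff by blast
  then obtain D' l where D': "D * D' = 1 + p * l"
    using prime_inverse_mod[OF p] by blast
  \<comment> \<open>Newton step: \<open>k = - m / D\<close> modulo \<open>p\<close>; the quadratic term is divisible by \<open>p ^ (2 * n)\<close>.\<close>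
  define k where "k = - m * D'"
  have "q (z + p ^ n * k) = q z + p ^ n * k * D + p ^ n * p ^ n * (a (Suc n) * k\<^sup>2)"
    unfolding q_def D_def by (simp add: power2_eq_square algebra_simps)
  also have "q z + p ^ n * k * D = p ^ n * m - p ^ n * m * (D * D')"
    unfolding m k_def by (simp add: algebra_simps)
  also have "\<dots> = p ^ Suc n * (- m * l)"
    unfolding D' by (simp add: algebra_simps)
  finally have "q (z + p ^ n * k) = p ^ Suc n * (- m * l) + p ^ n * p ^ n * (a (Suc n) * k\<^sup>2)" .
  moreover have "p ^ Suc n dvd p ^ n * p ^ n"
    using n le_imp_power_dvd[of "Suc n" "n + n" p] by (simp add: power_add)
  ultimately have "p ^ Suc n dvd q (z + p ^ n * k)"
    by simp
  moreover have "p dvd (2 * a 1 * (z + p ^ n * k) + t 1) - (2 * a 1 * z + t 1)"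
    using n by (simp add: algebra_simps dvd_power)
  then have "\<not> p dvd 2 * a 1 * (z + p ^ n * k) + t 1"
    using simple dvd_diff_imp_dvd_iff by blast
  ultimately show ?thesis
    using that unfolding q_def by blast
qed

lemma hensel:
  fixes p :: int and a t w :: "nat \<Rightarrow> int"
  assumes p: "prime p" and coh: "coherent p a" "coherent p t" "coherent p w"
    and root: "p dvd a 1 * y\<^sub>0\<^sup>2 + t 1 * y\<^sub>0 + w 1" and simple: "\<not> p dvd 2 * a 1 * y\<^sub>0 + t 1"
  obtains y where "coherent p y" "\<And>n. p ^ n dvd a n * (y n)\<^sup>2 + t n * y n + w n"
proof -
  define Inv where
    "Inv n z \<longleftrightarrow> p ^ n dvd a n * z\<^sup>2 + t n * z + w n \<and> \<not> p dvd 2 * a 1 * z + t 1" for n z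
  have "\<forall>n z. \<exists>k. 1 \<le> n \<and> Inv n z \<longrightarrow> Inv (Suc n) (z + p ^ n * k)"
    using hensel_lift[OF p coh] unfolding Inv_def by metis
  then obtain lift where lift: "\<And>n z. 1 \<le> n \<Longrightarrow> Inv n z \<Longrightarrow> Inv (Suc n) (z + p ^ n * lift n z)"
    by metis
  define y where "y = rec_nat y\<^sub>0 (\<lambda>n z. z + p ^ n * (if n = 0 then 0 else lift n z))"
  have y_Suc: "y (Suc n) = y n + p ^ n * (if n = 0 then 0 else lift n (y n))" for n
    unfolding y_def by simp
  have "Inv n (y n)" if "1 \<le> n" for n
    using that
  proof (induction rule: dec_induct)
    case base
    show ?case using root simple by (simp add: Inv_def y_Suc y_def)
  next
    case (step n)
    then show ?case using lift[of n "y n"] by (simp add: y_Suc)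
  qed
  then have "p ^ n dvd a n * (y n)\<^sup>2 + t n * y n + w n" for n
    unfolding Inv_def by (cases "n = 0") auto
  moreover have "coherent p y"
    by (rule coherentI) (simp add: y_Suc)
  ultimately show ?thesis using that by blast
qed

section \<open>Quadratic polynomials modulo a prime\<close>

definition simple_root_mod :: "int \<Rightarrow> int \<Rightarrow> int \<Rightarrow> int \<Rightarrow> bool" where
  "simple_root_mod p a t w \<longleftrightarrow> (\<exists>y\<in>{0..<p}. p dvd a * y\<^sup>2 + t * y + w \<and> \<not> p dvd 2 * a * y + t)"

definition double_root_mod :: "int \<Rightarrow> int \<Rightarrow> int \<Rightarrow> int \<Rightarrow> int \<Rightarrow> bool" where
  "double_root_mod p a t w r \<longleftrightarrow> p dvd a * r\<^sup>2 + t * r + w \<and> p dvd 2 * a * r + t"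

lemma quadratic_dvd_diff:
  fixes p :: int
  assumes "p dvd y - y'"
  shows "p dvd (a * y\<^sup>2 + t * y + w) - (a * y'\<^sup>2 + t * y' + w)"
proof -
  have "p dvd a * (y\<^sup>2 - y'\<^sup>2) + t * (y - y')"
    using dvd_diff_power[OF assms, of 2] assms by simp
  then show ?thesis by (simp add: algebra_simps)
qed

lemma root_mod_eq_double_root:
  fixes p a t w r y :: int
  assumes "prime p" "\<not> p dvd a" "double_root_mod p a t w r" "p dvd a * y\<^sup>2 + t * y + w"
  shows "p dvd y - r"
proof -
  have expand: "a * y\<^sup>2 + t * y + w
      = a * (y - r)\<^sup>2 + ((2 * a * r + t) * (y - r) + (a * r\<^sup>2 + t * r + w))"
    by (simp add: power2_eq_square algebra_simps)
  have "p dvd (2 * a * r + t) * (y - r) + (a * r\<^sup>2 + t * r + w)"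
    using assms(3) unfolding double_root_mod_def by simp
  with assms(4) have "p dvd a * (y - r)\<^sup>2"
    unfolding expand by (simp add: dvd_add_left_iff)
  with assms(1,2) show ?thesis
    using prime_dvd_mult_iff prime_dvd_power by blast
qed

lemma simple_root_mod_imp_not_double:
  fixes p a t w r :: int
  assumes "prime p" "\<not> p dvd a" "simple_root_mod p a t w"
  shows "\<not> double_root_mod p a t w r"
proof
  assume double: "double_root_mod p a t w r"
  obtain y where y: "p dvd a * y\<^sup>2 + t * y + w" "\<not> p dvd 2 * a * y + t"
    using assms(3) unfolding simple_root_mod_def by blast
  have "p dvd (2 * a * y + t) - (2 * a * r + t)"
    using root_mod_eq_double_root[OF assms(1,2) double y(1)]
    by (metis dvd_mult mult_diff_mult diff_diff_eq2 add_diff_cancel_right right_diff_distrib)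
  with double y(2) show False
    unfolding double_root_mod_def using dvd_diff_imp_dvd_iff by blast
qed

lemma double_root_mod_unique:
  fixes p a t w r r' :: int
  assumes "prime p" "\<not> p dvd a" "double_root_mod p a t w r" "double_root_mod p a t w r'"
    and "r \<in> {0..<p}" "r' \<in> {0..<p}"
  shows "r = r'"
  using root_mod_eq_double_root[OF assms(1-3)] assms(4-6) dvd_diff_imp_eq
  unfolding double_root_mod_def by metis

lemma simple_root_mod_cong:
  assumes "p dvd t - t'" "p dvd w - w'"
  shows "simple_root_mod p a t w = simple_root_mod p a t' w'"
proof -
  have "a * y\<^sup>2 + t * y + w - (a * y\<^sup>2 + t' * y + w') = (t - t') * y + (w - w')"
    "2 * a * y + t - (2 * a * y + t') = t - t'" for y
    by (simp_all add: algebra_simps)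
  then show ?thesis
    unfolding simple_root_mod_def using assms by (metis dvd_add dvd_mult2 dvd_diff_imp_dvd_iff)
qed

lemma double_root_mod_cong:
  assumes "p dvd t - t'" "p dvd w - w'"
  shows "double_root_mod p a t w r = double_root_mod p a t' w' r"
proof -
  have "a * r\<^sup>2 + t * r + w - (a * r\<^sup>2 + t' * r + w') = (t - t') * r + (w - w')"
    "2 * a * r + t - (2 * a * r + t') = t - t'"
    by (simp_all add: algebra_simps)
  then show ?thesis
    unfolding double_root_mod_def using assms by (metis dvd_add dvd_mult2 dvd_diff_imp_dvd_iff)
qed

lemma simple_root_mod_mod:
  "simple_root_mod p a (t mod p) w = simple_root_mod p a t w"
  "simple_root_mod p a t (w mod p) = simple_root_mod p a t w"
  by (rule simple_root_mod_cong; simp add: dvd_diff_mod dvd_diff_commute[of _ "_ mod p"])+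

lemma double_root_mod_mod:
  "double_root_mod p a (t mod p) w r = double_root_mod p a t w r"
  "double_root_mod p a t (w mod p) r = double_root_mod p a t w r"
  by (rule double_root_mod_cong; simp add: dvd_diff_mod dvd_diff_commute[of _ "_ mod p"])+

lemma of_bool_bex_eq_sum:
  assumes "finite R" "\<And>r r'. r \<in> R \<Longrightarrow> r' \<in> R \<Longrightarrow> P r \<Longrightarrow> P r' \<Longrightarrow> r = r'"
  shows "(of_bool (\<exists>r\<in>R. P r) :: 'a::semiring_1) = (\<Sum>r\<in>R. of_bool (P r))"
proof (cases "\<exists>r\<in>R. P r")
  case True
  then obtain r\<^sub>0 where "r\<^sub>0 \<in> R" "P r\<^sub>0" by blast
  with assms(2) have "R \<inter> {r. P r} = {r\<^sub>0}" by blast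
  with True assms(1) show ?thesis by (simp add: sum_of_bool_eq)
next
  case False
  then have "R \<inter> {r. P r} = {}" by blast
  with False assms(1) show ?thesis by (simp add: sum_of_bool_eq)
qed

lemma sum_of_bool_dvd_add:
  fixes p c :: int
  assumes "p > 0"
  shows "(\<Sum>w\<in>{0..<p}. of_bool (p dvd c + w) :: int) = 1"
proof -
  have "{0..<p} \<inter> {w. p dvd c + w} = {(- c) mod p}"
  proof safe
    fix w
    assume "w \<in> {0..<p}" "p dvd c + w"
    then show "w = (- c) mod p"
      using mod_eq_dvd_iff[of w p "- c"] by (simp add: add.commute)
  next
    show "(- c) mod p \<in> {0..<p}"
      using assms by simp
    show "p dvd c + (- c) mod p"
      using mod_eq_dvd_iff[of "(- c) mod p" p "- c"] by (simp add: add.commute)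
  qed
  then show ?thesis by simp
qed

lemma card_roots_mod_of_simple_root:
  fixes p a t w y\<^sub>1 :: int
  assumes p: "prime p" and a: "\<not> p dvd a" and y\<^sub>1: "y\<^sub>1 \<in> {0..<p}"
    and root: "p dvd a * y\<^sub>1\<^sup>2 + t * y\<^sub>1 + w" and simple: "\<not> p dvd 2 * a * y\<^sub>1 + t"
  shows "card {y\<in>{0..<p}. p dvd a * y\<^sup>2 + t * y + w} = 2"
proof -
  obtain a' l where a': "a * a' = 1 + p * l"
    using prime_inverse_mod[OF p a] by blast
  obtain m where m: "a * y\<^sub>1\<^sup>2 + t * y\<^sub>1 + w = p * m"
    using root by blast
  \<comment> \<open>The second root is \<open>y\<^sub>2 = - t / a - y\<^sub>1\<close> modulo \<open>p\<close>.\<close>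
  define y\<^sub>2 where "y\<^sub>2 = (- t * a' - y\<^sub>1) mod p"
  define k where "k = (- t * a' - y\<^sub>1) div p"
  have "p > 0" using p prime_gt_0_int by blast
  then have y\<^sub>2_range: "y\<^sub>2 \<in> {0..<p}" unfolding y\<^sub>2_def by simp
  have y\<^sub>2: "y\<^sub>2 = - t * a' - y\<^sub>1 - p * k"
    unfolding y\<^sub>2_def k_def by (simp add: minus_div_mult_eq_mod[symmetric])
  define c where "c = - a * k - t * l"
  have vieta: "t + a * (y\<^sub>1 + y\<^sub>2) = p * c"
  proof -
    have "t + a * (y\<^sub>1 + y\<^sub>2) = t - (a * a') * t - a * p * k"
      unfolding y\<^sub>2 by (simp add: algebra_simps)
    then show ?thesis unfolding a' c_def by (simp add: algebra_simps)
  qed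
  have factor: "a * y\<^sup>2 + t * y + w = a * ((y - y\<^sub>1) * (y - y\<^sub>2)) + p * (c * y + m - y\<^sub>1 * c)" for y
  proof -
    have "w = p * m - a * y\<^sub>1\<^sup>2 - t * y\<^sub>1" using m by simp
    then have "a * y\<^sup>2 + t * y + w
        = a * ((y - y\<^sub>1) * (y - y\<^sub>2)) + (t + a * (y\<^sub>1 + y\<^sub>2)) * y + p * m - y\<^sub>1 * (t + a * (y\<^sub>1 + y\<^sub>2))"
      by (simp add: power2_eq_square algebra_simps)
    then show ?thesis unfolding vieta by (simp add: algebra_simps)
  qed
  have "p dvd a * y\<^sup>2 + t * y + w \<longleftrightarrow> p dvd y - y\<^sub>1 \<or> p dvd y - y\<^sub>2" for y
  proof -
    have "p dvd a * y\<^sup>2 + t * y + w \<longleftrightarrow> p dvd a * ((y - y\<^sub>1) * (y - y\<^sub>2))"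
      unfolding factor by (metis dvd_add_left_iff dvd_triv_left)
    also have "\<dots> \<longleftrightarrow> p dvd y - y\<^sub>1 \<or> p dvd y - y\<^sub>2"
      using p a prime_dvd_mult_iff by blast
    finally show ?thesis .
  qed
  then have "{y\<in>{0..<p}. p dvd a * y\<^sup>2 + t * y + w} = {y\<^sub>1, y\<^sub>2}"
    using y\<^sub>1 y\<^sub>2_range dvd_diff_imp_eq by auto
  moreover have "y\<^sub>1 \<noteq> y\<^sub>2"
  proof
    assume "y\<^sub>1 = y\<^sub>2"
    then have "2 * a * y\<^sub>1 + t = p * c" using vieta by simp
    with simple show False by simp
  qed
  ultimately show ?thesis by simp
qed

lemma card_roots_mod:
  fixes p a t w :: int
  assumes p: "prime p" and a: "\<not> p dvd a"
  shows "int (card {y\<in>{0..<p}. p dvd a * y\<^sup>2 + t * y + w})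
    = 2 * of_bool (simple_root_mod p a t w) + of_bool (\<exists>r\<in>{0..<p}. double_root_mod p a t w r)"
proof (cases "simple_root_mod p a t w")
  case True
  then obtain y\<^sub>1 where "y\<^sub>1 \<in> {0..<p}" "p dvd a * y\<^sub>1\<^sup>2 + t * y\<^sub>1 + w" "\<not> p dvd 2 * a * y\<^sub>1 + t"
    unfolding simple_root_mod_def by blast
  from card_roots_mod_of_simple_root[OF p a this] True simple_root_mod_imp_not_double[OF p a True]
  show ?thesis by simp
next
  case False
  then have roots: "{y\<in>{0..<p}. p dvd a * y\<^sup>2 + t * y + w}
      = {r\<in>{0..<p}. double_root_mod p a t w r}"
    unfolding simple_root_mod_def double_root_mod_def by blast
  show ?thesis
  proof (cases "\<exists>r\<in>{0..<p}. double_root_mod p a t w r")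
    case True
    then obtain r where "r \<in> {0..<p}" "double_root_mod p a t w r" by blast
    then have "{r\<in>{0..<p}. double_root_mod p a t w r} = {r}"
      using double_root_mod_unique[OF p a] by blast
    with False True show ?thesis unfolding roots by simp
  next
    case none: False
    then have empty: "{r\<in>{0..<p}. double_root_mod p a t w r} = {}" by blast
    from False none show ?thesis unfolding roots empty by simp
  qed
qed

lemma sum_double_root_mod_at:
  fixes p :: int
  assumes "p > 0"
  shows "(\<Sum>t\<in>{0..<p}. \<Sum>w\<in>{0..<p}. of_bool (double_root_mod p a t w r) :: int) = 1"
proof -
  have "(\<Sum>t\<in>{0..<p}. \<Sum>w\<in>{0..<p}. of_bool (double_root_mod p a t w r) :: int)
      = (\<Sum>t\<in>{0..<p}. of_bool (p dvd 2 * a * r + t) * (\<Sum>w\<in>{0..<p}. of_bool (p dvd (a * r\<^sup>2 + t * r) + w)))"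
    unfolding double_root_mod_def sum_distrib_left by (intro sum.cong refl) auto
  also have "\<dots> = 1"
    using sum_of_bool_dvd_add[OF assms] by simp
  finally show ?thesis .
qed

text \<open>Each \<open>y\<close> is a root for exactly one \<open>w\<close>, so the roots over all \<open>(t, w)\<close> number \<open>p\<^sup>2\<close>;
  exactly \<open>p\<close> pairs have a double root.\<close>

lemma sum_simple_root_mod:
  fixes p a :: int
  assumes p: "prime p" and a: "\<not> p dvd a"
  shows "2 * (\<Sum>t\<in>{0..<p}. \<Sum>w\<in>{0..<p}. of_bool (simple_root_mod p a t w) :: int) = p\<^sup>2 - p"
proof -
  have p0: "p > 0" using p prime_gt_0_int by blast
  have card_eq: "int (card {y\<in>{0..<p}. Q y}) = (\<Sum>y\<in>{0..<p}. of_bool (Q y))" for Q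
    by (simp add: sum_of_bool_eq Int_def)
  have "(\<Sum>t\<in>{0..<p}. \<Sum>w\<in>{0..<p}.
        2 * of_bool (simple_root_mod p a t w) + of_bool (\<exists>r\<in>{0..<p}. double_root_mod p a t w r))
      = (\<Sum>t\<in>{0..<p}. \<Sum>w\<in>{0..<p}. \<Sum>y\<in>{0..<p}. of_bool (p dvd (a * y\<^sup>2 + t * y) + w) :: int)"
    by (intro sum.cong refl) (simp only: card_eq[symmetric] card_roots_mod[OF p a])
  also have "\<dots> = (\<Sum>t\<in>{0..<p}. \<Sum>y\<in>{0..<p}. \<Sum>w\<in>{0..<p}. of_bool (p dvd (a * y\<^sup>2 + t * y) + w))"
    by (intro sum.cong refl sum.swap)
  also have "\<dots> = p\<^sup>2"
    using p0 by (simp only: sum_of_bool_dvd_add) (simp add: power2_eq_square)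
  finally have total: "(\<Sum>t\<in>{0..<p}. \<Sum>w\<in>{0..<p}.
        2 * of_bool (simple_root_mod p a t w) + of_bool (\<exists>r\<in>{0..<p}. double_root_mod p a t w r))
      = p\<^sup>2" .
  have "(\<Sum>t\<in>{0..<p}. \<Sum>w\<in>{0..<p}. of_bool (\<exists>r\<in>{0..<p}. double_root_mod p a t w r) :: int)
      = (\<Sum>t\<in>{0..<p}. \<Sum>w\<in>{0..<p}. \<Sum>r\<in>{0..<p}. of_bool (double_root_mod p a t w r))"
    by (intro sum.cong refl of_bool_bex_eq_sum) (auto intro: double_root_mod_unique[OF p a])
  also have "\<dots> = (\<Sum>r\<in>{0..<p}. \<Sum>t\<in>{0..<p}. \<Sum>w\<in>{0..<p}. of_bool (double_root_mod p a t w r))"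
    by (subst sum.swap) (intro sum.cong refl sum.swap)
  also have "\<dots> = p"
    using p0 by (simp only: sum_double_root_mod_at[OF p0]) simp
  finally have doubles:
    "(\<Sum>t\<in>{0..<p}. \<Sum>w\<in>{0..<p}. of_bool (\<exists>r\<in>{0..<p}. double_root_mod p a t w r) :: int) = p" .
  from total doubles show ?thesis
    by (simp only: sum.distrib sum_distrib_left)
qed

section \<open>Sums over residues modulo powers of \<open>p\<close>\<close>

lemma sum_atLeastLessThan_int_mult:
  fixes A B :: int
  assumes A: "A > 0" and B: "B > 0"
  shows "(\<Sum>x\<in>{0..<A * B}. g x) = (\<Sum>x\<^sub>0\<in>{0..<A}. \<Sum>x\<^sub>1\<in>{0..<B}. g (x\<^sub>0 + A * x\<^sub>1))"
proof -
  have "x\<^sub>0 + A * x\<^sub>1 < A * B" if "x\<^sub>0 \<in> {0..<A}" "x\<^sub>1 \<in> {0..<B}" for x\<^sub>0 x\<^sub>1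
  proof -
    have "A * x\<^sub>1 \<le> A * (B - 1)"
      using that A by (intro mult_left_mono) auto
    with that show ?thesis by (simp add: algebra_simps)
  qed
  moreover have "z div A < B" if "z < A * B" for z
  proof -
    have "A * (z div A) \<le> z"
      using A pos_mod_sign[of A z] mult_div_mod_eq[of A z] by linarith
    with that A show ?thesis
      using mult_less_cancel_left_pos[of A "z div A" B] by linarith
  qed
  ultimately have "bij_betw (\<lambda>(x\<^sub>0, x\<^sub>1). x\<^sub>0 + A * x\<^sub>1) ({0..<A} \<times> {0..<B}) {0..<A * B}"
    using A by (intro bij_betw_byWitness[where f' = "\<lambda>z. (z mod A, z div A)"])
      (auto simp: pos_imp_zdiv_nonneg_iff)
  then have "(\<Sum>x\<in>{0..<A * B}. g x) = (\<Sum>(x\<^sub>0, x\<^sub>1)\<in>{0..<A} \<times> {0..<B}. g (x\<^sub>0 + A * x\<^sub>1))"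
    by (simp add: sum.reindex_bij_betw[symmetric] case_prod_unfold)
  then show ?thesis by (simp add: sum.cartesian_product)
qed

lemma sum_mod_translate:
  fixes M c :: int
  assumes "M > 0"
  shows "(\<Sum>x\<in>{0..<M}. g ((c + x) mod M)) = (\<Sum>x\<in>{0..<M}. g x)"
proof -
  have "bij_betw (\<lambda>x. (c + x) mod M) {0..<M} {0..<M}"
    using assms
    by (intro bij_betw_byWitness[where f' = "\<lambda>z. (z - c) mod M"])
      (auto simp: mod_diff_left_eq mod_add_right_eq)
  then show ?thesis by (rule sum.reindex_bij_betw)
qed

lemma sum_mod_power_Suc:
  fixes p K :: int
  assumes p: "p > 0"
  shows "(\<Sum>s\<in>{0..<p ^ Suc m}. h ((s + K) mod p ^ m)) = p * (\<Sum>s\<in>{0..<p ^ m}. h s)"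
proof -
  have "(\<Sum>s\<in>{0..<p ^ Suc m}. h ((s + K) mod p ^ m))
      = (\<Sum>x\<^sub>0\<in>{0..<p ^ m}. \<Sum>j\<in>{0..<p}. h ((x\<^sub>0 + p ^ m * j + K) mod p ^ m))"
    using sum_atLeastLessThan_int_mult[of "p ^ m" p] p by (simp add: mult.commute)
  also have "\<dots> = (\<Sum>x\<^sub>0\<in>{0..<p ^ m}. \<Sum>j\<in>{0..<p}. h ((K + x\<^sub>0) mod p ^ m))"
    by (intro sum.cong refl arg_cong[where f = h]) (simp add: mod_eq_dvd_iff)
  also have "\<dots> = (\<Sum>x\<^sub>0\<in>{0..<p ^ m}. p * h ((K + x\<^sub>0) mod p ^ m))"
    using p by simp
  also have "\<dots> = p * (\<Sum>s\<in>{0..<p ^ m}. h s)"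
    using p by (simp add: sum_distrib_left[symmetric] sum_mod_translate)
  finally show ?thesis .
qed

text \<open>Splitting off the lowest base-\<open>p\<close> digit of \<open>t\<close>: the factor \<open>F\<close> sees only that digit, while
  \<open>(t + c) div p\<close> runs through all residues modulo \<open>p ^ m\<close> once the digit is fixed.\<close>

lemma sum_split_low_digit:
  fixes p c :: int and F h :: "int \<Rightarrow> int"
  assumes p: "p > 0" and F: "\<And>t. F t = F (t mod p)"
  shows "(\<Sum>t\<in>{0..<p ^ Suc m}. F t * h (((t + c) div p) mod p ^ m))
    = (\<Sum>t\<^sub>0\<in>{0..<p}. F t\<^sub>0) * (\<Sum>x\<in>{0..<p ^ m}. h x)"
proof -
  have "(\<Sum>t\<in>{0..<p ^ Suc m}. F t * h (((t + c) div p) mod p ^ m))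
      = (\<Sum>t\<^sub>0\<in>{0..<p}. \<Sum>t\<^sub>1\<in>{0..<p ^ m}. F (t\<^sub>0 + p * t\<^sub>1) * h (((t\<^sub>0 + p * t\<^sub>1 + c) div p) mod p ^ m))"
    using sum_atLeastLessThan_int_mult[of p "p ^ m"] p by simp
  also have "\<dots> = (\<Sum>t\<^sub>0\<in>{0..<p}. \<Sum>t\<^sub>1\<in>{0..<p ^ m}. F t\<^sub>0 * h (((t\<^sub>0 + c) div p + t\<^sub>1) mod p ^ m))"
  proof (intro sum.cong refl)
    fix t\<^sub>0 t\<^sub>1
    assume "t\<^sub>0 \<in> {0..<p}"
    then have "F (t\<^sub>0 + p * t\<^sub>1) = F t\<^sub>0"
      using F[of "t\<^sub>0 + p * t\<^sub>1"] by simp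
    moreover have "(t\<^sub>0 + p * t\<^sub>1 + c) div p = ((t\<^sub>0 + c) + t\<^sub>1 * p) div p"
      by (rule arg_cong[where f = "\<lambda>x. x div p"]) (simp add: algebra_simps)
    moreover have "\<dots> = (t\<^sub>0 + c) div p + t\<^sub>1"
      using p by simp
    ultimately show "F (t\<^sub>0 + p * t\<^sub>1) * h (((t\<^sub>0 + p * t\<^sub>1 + c) div p) mod p ^ m)
        = F t\<^sub>0 * h (((t\<^sub>0 + c) div p + t\<^sub>1) mod p ^ m)"
      by simp
  qed
  also have "\<dots> = (\<Sum>t\<^sub>0\<in>{0..<p}. F t\<^sub>0 * (\<Sum>x\<in>{0..<p ^ m}. h x))"
    using p by (simp add: sum_distrib_left[symmetric] sum_mod_translate)
  also have "\<dots> = (\<Sum>t\<^sub>0\<in>{0..<p}. F t\<^sub>0) * (\<Sum>x\<in>{0..<p ^ m}. h x)"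
    by (simp add: sum_distrib_right)
  finally show ?thesis .
qed

lemma sum_periodic:
  fixes p :: int and F :: "int \<Rightarrow> int"
  assumes "p > 0" "\<And>t. F t = F (t mod p)"
  shows "(\<Sum>t\<in>{0..<p ^ Suc m}. F t) = p ^ m * (\<Sum>t\<in>{0..<p}. F t)"
proof -
  have "(\<Sum>t\<in>{0..<p ^ Suc m}. F t * (\<lambda>_. 1) (((t + 0) div p) mod p ^ m))
      = (\<Sum>t\<in>{0..<p}. F t) * (\<Sum>x\<in>{0..<p ^ m}. (\<lambda>_. 1) x)"
    by (rule sum_split_low_digit[where F = F and h = "\<lambda>_. 1" and c = 0, OF assms])
  with assms(1) show ?thesis by (simp add: mult.commute)
qed

section \<open>Biquadratic forms with coherent coefficients\<close>

text \<open>\<open>f i j n\<close> is the coefficient of \<open>x ^ i * y ^ j\<close> known modulo \<open>p ^ n\<close>.\<close>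

type_synonym biquad = "nat \<Rightarrow> nat \<Rightarrow> nat \<Rightarrow> int"

definition bq_eval :: "biquad \<Rightarrow> nat \<Rightarrow> int \<Rightarrow> int \<Rightarrow> int" where
  "bq_eval f n x y = (\<Sum>i\<le>2. \<Sum>j\<le>2. f i j n * x ^ i * y ^ j)"

lemma bq_eval_expand: "bq_eval f n x y =
     f 0 0 n + f 0 1 n * y + f 0 2 n * y\<^sup>2
   + f 1 0 n * x + f 1 1 n * x * y + f 1 2 n * x * y\<^sup>2
   + f 2 0 n * x\<^sup>2 + f 2 1 n * x\<^sup>2 * y + f 2 2 n * x\<^sup>2 * y\<^sup>2"
  by (simp add: bq_eval_def numeral_2_eq_2 algebra_simps)

definition bq_has_zero :: "int \<Rightarrow> biquad \<Rightarrow> bool" where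
  "bq_has_zero p f \<longleftrightarrow>
    (\<exists>x y. coherent p x \<and> coherent p y \<and> (\<forall>n. p ^ n dvd bq_eval f n (x n) (y n)))"

definition quadratic_in_y_mod :: "int \<Rightarrow> biquad \<Rightarrow> bool" where
  "quadratic_in_y_mod p f \<longleftrightarrow>
    (\<forall>i\<le>2. \<forall>j\<le>2. coherent p (f i j)) \<and> (\<forall>j\<le>2. p dvd f 1 j 1 \<and> p dvd f 2 j 1)"

text \<open>Substitute \<open>y = r + p * u\<close> and divide by \<open>p\<close>. The result is a form in \<open>(u, x)\<close>, so the
  two variables exchange their roles, and one level of precision is lost.\<close>

definition bq_descend :: "int \<Rightarrow> biquad \<Rightarrow> int \<Rightarrow> biquad" where
  "bq_descend p f r i j n =
    (if i = 0 then (f j 0 (Suc n) + r * f j 1 (Suc n) + r\<^sup>2 * f j 2 (Suc n)) div p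
     else if i = 1 then f j 1 (Suc n) + 2 * r * f j 2 (Suc n)
     else p * f j 2 (Suc n))"

lemma bq_descend_simps:
  "bq_descend p f r 0 j = (\<lambda>n. (f j 0 (Suc n) + r * f j 1 (Suc n) + r\<^sup>2 * f j 2 (Suc n)) div p)"
  "bq_descend p f r 1 j = (\<lambda>n. f j 1 (Suc n) + 2 * r * f j 2 (Suc n))"
  "bq_descend p f r 2 j = (\<lambda>n. p * f j 2 (Suc n))"
  by (simp_all add: bq_descend_def fun_eq_iff)

lemma bq_eval_descend:
  assumes "p \<noteq> 0"
    and dvd: "\<And>j. j \<le> 2 \<Longrightarrow> p dvd f j 0 (Suc n) + r * f j 1 (Suc n) + r\<^sup>2 * f j 2 (Suc n)"
  shows "p * bq_eval (bq_descend p f r) n u x = bq_eval f (Suc n) x (r + p * u)"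
proof -
  obtain q\<^sub>0 q\<^sub>1 q\<^sub>2 where
    q: "f 0 0 (Suc n) + r * f 0 1 (Suc n) + r\<^sup>2 * f 0 2 (Suc n) = p * q\<^sub>0"
       "f 1 0 (Suc n) + r * f 1 1 (Suc n) + r\<^sup>2 * f 1 2 (Suc n) = p * q\<^sub>1"
       "f 2 0 (Suc n) + r * f 2 1 (Suc n) + r\<^sup>2 * f 2 2 (Suc n) = p * q\<^sub>2"
    using dvd[of 0] dvd[of 1] dvd[of 2] by (auto elim!: dvdE)
  have e: "f 0 0 (Suc n) = p * q\<^sub>0 - r * f 0 1 (Suc n) - r\<^sup>2 * f 0 2 (Suc n)"
    "f 1 0 (Suc n) = p * q\<^sub>1 - r * f 1 1 (Suc n) - r\<^sup>2 * f 1 2 (Suc n)"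
    "f 2 0 (Suc n) = p * q\<^sub>2 - r * f 2 1 (Suc n) - r\<^sup>2 * f 2 2 (Suc n)"
    using q by simp_all
  have d: "bq_descend p f r 0 0 n = q\<^sub>0" "bq_descend p f r 0 1 n = q\<^sub>1"
    "bq_descend p f r 0 2 n = q\<^sub>2"
    "bq_descend p f r 1 j n = f j 1 (Suc n) + 2 * r * f j 2 (Suc n)"
    "bq_descend p f r 2 j n = p * f j 2 (Suc n)" for j
    using q assms(1) by (simp_all add: bq_descend_def)
  show ?thesis
    unfolding bq_eval_expand d e by (simp add: power2_eq_square algebra_simps)
qed

lemma bq_eval_diff_dvd:
  assumes "\<And>i j. i \<le> 2 \<Longrightarrow> j \<le> 2 \<Longrightarrow> m dvd f i j n - f' i j n'" "m dvd x - x'" "m dvd y - y'"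
  shows "m dvd bq_eval f n x y - bq_eval f' n' x' y'"
proof -
  have "bq_eval f n x y - bq_eval f' n' x' y'
      = (\<Sum>i\<le>2. \<Sum>j\<le>2. f i j n * x ^ i * y ^ j - f' i j n' * x' ^ i * y' ^ j)"
    unfolding bq_eval_def by (simp add: sum_subtractf)
  also have "m dvd \<dots>"
    by (intro dvd_sum dvd_diff_mult dvd_diff_power assms) auto
  finally show ?thesis .
qed

lemma bq_eval_cong:
  "(\<And>i j. i \<le> 2 \<Longrightarrow> j \<le> 2 \<Longrightarrow> f i j n = f' i j n) \<Longrightarrow> bq_eval f n x y = bq_eval f' n x y"
  unfolding bq_eval_def by (intro sum.cong refl) auto

lemma bq_has_zero_cong:
  assumes "\<And>i j n. i \<le> 2 \<Longrightarrow> j \<le> 2 \<Longrightarrow> p ^ n dvd f i j n - f' i j n"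
  shows "bq_has_zero p f = bq_has_zero p f'"
proof -
  have "p ^ n dvd bq_eval f n x y \<longleftrightarrow> p ^ n dvd bq_eval f' n x y" for n x y
    by (intro dvd_diff_imp_dvd_iff bq_eval_diff_dvd) (simp_all add: assms)
  then show ?thesis unfolding bq_has_zero_def by simp
qed

lemma quadratic_in_y_modD:
  assumes "quadratic_in_y_mod p f" "i \<le> 2" "j \<le> 2"
  shows "coherent p (f i j)" "1 \<le> n \<Longrightarrow> p dvd f i j n - f i j 1"
  using assms coherentD[of p "f i j" 1 n] unfolding quadratic_in_y_mod_def by auto

lemma bq_eval_mod_p:
  assumes f: "quadratic_in_y_mod p f" and n: "1 \<le> n"
  shows "p dvd bq_eval f n x y - (f 0 2 1 * y\<^sup>2 + f 0 1 1 * y + f 0 0 1)"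
proof -
  have "p dvd bq_eval f n x y - bq_eval f 1 x y"
    by (intro bq_eval_diff_dvd quadratic_in_y_modD[OF f] n) auto
  moreover have "p dvd f 1 j 1" "p dvd f 2 j 1" if "j \<le> 2" for j
    using f that unfolding quadratic_in_y_mod_def by auto
  then have "p dvd bq_eval f 1 x y - (f 0 2 1 * y\<^sup>2 + f 0 1 1 * y + f 0 0 1)"
    by (simp add: bq_eval_expand)
  ultimately show ?thesis by (rule dvd_diff_trans)
qed

lemma bq_has_zero_imp_root_mod:
  assumes f: "quadratic_in_y_mod p f" and p: "p > 0" and zero: "bq_has_zero p f"
  obtains y where "y \<in> {0..<p}" "p dvd f 0 2 1 * y\<^sup>2 + f 0 1 1 * y + f 0 0 1"
proof -
  obtain x y where "\<And>n. p ^ n dvd bq_eval f n (x n) (y n)"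
    using zero unfolding bq_has_zero_def by blast
  then have "p dvd bq_eval f 1 (x 1) (y 1)"
    by (metis power_one_right)
  then have "p dvd f 0 2 1 * (y 1)\<^sup>2 + f 0 1 1 * y 1 + f 0 0 1"
    using dvd_diff_imp_dvd_iff[OF bq_eval_mod_p[OF f order_refl]] by blast
  moreover have "p dvd y 1 - y 1 mod p"
    by (simp add: dvd_diff_mod)
  ultimately have "p dvd f 0 2 1 * (y 1 mod p)\<^sup>2 + f 0 1 1 * (y 1 mod p) + f 0 0 1"
    using dvd_diff_imp_dvd_iff[OF quadratic_dvd_diff] by blast
  moreover have "y 1 mod p \<in> {0..<p}"
    using p by simp
  ultimately show ?thesis
    using that by blast
qed

lemma double_root_mod_row_dvd:
  assumes f: "quadratic_in_y_mod p f" and r: "double_root_mod p (f 0 2 1) (f 0 1 1) (f 0 0 1) r"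
    and j: "j \<le> 2"
  shows "p dvd f j 0 (Suc n) + r * f j 1 (Suc n) + r\<^sup>2 * f j 2 (Suc n)"
proof -
  have "p dvd f j b (Suc n) - f j b 1" if "b \<le> 2" for b
    using quadratic_in_y_modD[OF f j that] by simp
  then have "p dvd (f j 0 (Suc n) - f j 0 1) + r * (f j 1 (Suc n) - f j 1 1)
      + r\<^sup>2 * (f j 2 (Suc n) - f j 2 1)"
    by simp
  moreover have "p dvd f j 0 1 + r * f j 1 1 + r\<^sup>2 * f j 2 1"
  proof -
    have "p dvd f 1 b 1" "p dvd f 2 b 1" if "b \<le> 2" for b
      using f that unfolding quadratic_in_y_mod_def by auto
    moreover have "p dvd f 0 0 1 + r * f 0 1 1 + r\<^sup>2 * f 0 2 1"
      using r unfolding double_root_mod_def by (simp add: algebra_simps)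
    moreover have "j = 0 \<or> j = 1 \<or> j = 2"
      using j by auto
    ultimately show ?thesis by auto
  qed
  ultimately have "p dvd ((f j 0 (Suc n) - f j 0 1) + r * (f j 1 (Suc n) - f j 1 1)
      + r\<^sup>2 * (f j 2 (Suc n) - f j 2 1)) + (f j 0 1 + r * f j 1 1 + r\<^sup>2 * f j 2 1)"
    by (rule dvd_add)
  then show ?thesis by (simp add: algebra_simps)
qed

lemma double_root_mod_slope_dvd:
  assumes f: "quadratic_in_y_mod p f" and r: "double_root_mod p (f 0 2 1) (f 0 1 1) (f 0 0 1) r"
  shows "p dvd f 0 1 (Suc n) + 2 * r * f 0 2 (Suc n)"
proof -
  have "p dvd f 0 j (Suc n) - f 0 j 1" if "j \<le> 2" for j
    using quadratic_in_y_modD[OF f _ that] by simp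
  then have "p dvd (f 0 1 (Suc n) - f 0 1 1) + 2 * r * (f 0 2 (Suc n) - f 0 2 1)"
    by simp
  moreover have "p dvd 2 * f 0 2 1 * r + f 0 1 1"
    using r unfolding double_root_mod_def by simp
  ultimately have "p dvd ((f 0 1 (Suc n) - f 0 1 1) + 2 * r * (f 0 2 (Suc n) - f 0 2 1))
      + (2 * f 0 2 1 * r + f 0 1 1)"
    by (rule dvd_add)
  then show ?thesis by (simp add: algebra_simps)
qed

lemma bq_has_zero_of_descend:
  assumes p: "p > 1" and f: "quadratic_in_y_mod p f"
    and r: "double_root_mod p (f 0 2 1) (f 0 1 1) (f 0 0 1) r"
    and zero: "bq_has_zero p (bq_descend p f r)"
  shows "bq_has_zero p f"
proof -
  obtain u x where u: "coherent p u" and x: "coherent p x"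
    and z: "\<And>n. p ^ n dvd bq_eval (bq_descend p f r) n (u n) (x n)"
    using zero unfolding bq_has_zero_def by blast
  define y where "y n = r + p * u n" for n
  have "coherent p y"
    unfolding y_def by (intro coherent_add coherent_const coherent_cmult u)
  moreover have "p ^ n dvd bq_eval f n (x n) (y n)" for n
  proof -
    have "bq_eval f (Suc n) (x n) (y n) = p * bq_eval (bq_descend p f r) n (u n) (x n)"
      unfolding y_def using p double_root_mod_row_dvd[OF f r] by (simp add: bq_eval_descend)
    then have "p ^ n dvd bq_eval f (Suc n) (x n) (y n)"
      using z[of n] by (simp add: dvd_mult_right)
    moreover have "p ^ n dvd bq_eval f (Suc n) (x n) (y n) - bq_eval f n (x n) (y n)"
      using quadratic_in_y_modD(1)[OF f] coherentD[of p _ n "Suc n"]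
      by (intro bq_eval_diff_dvd) auto
    ultimately show ?thesis
      using dvd_diff_imp_dvd_iff by blast
  qed
  ultimately show ?thesis
    unfolding bq_has_zero_def using x by blast
qed

lemma bq_has_zero_descend:
  assumes p: "prime p" and f: "quadratic_in_y_mod p f" and a: "\<not> p dvd f 0 2 1"
    and r: "double_root_mod p (f 0 2 1) (f 0 1 1) (f 0 0 1) r" and zero: "bq_has_zero p f"
  shows "bq_has_zero p (bq_descend p f r)"
proof -
  have p1: "p > 1" using p prime_gt_1_int by blast
  obtain x y where x: "coherent p x" and y: "coherent p y"
    and z: "\<And>n. p ^ n dvd bq_eval f n (x n) (y n)"
    using zero unfolding bq_has_zero_def by blast
  \<comment> \<open>every zero reduces modulo \<open>p\<close> to the double root, so \<open>y = r + p * u\<close>\<close>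
  have "p dvd bq_eval f 1 (x 1) (y 1)"
    using z[of 1] by simp
  then have "p dvd f 0 2 1 * (y 1)\<^sup>2 + f 0 1 1 * y 1 + f 0 0 1"
    using dvd_diff_imp_dvd_iff[OF bq_eval_mod_p[OF f order_refl]] by blast
  then have "p dvd y 1 - r"
    using root_mod_eq_double_root[OF p a r] by blast
  then have "p dvd y (Suc n) - r" for n
    using coherentD[OF y, of 1 "Suc n"] dvd_diff_trans by simp
  define u where "u n = (y (Suc n) - r) div p" for n
  have u: "y (Suc n) = r + p * u n" for n
    using \<open>p dvd y (Suc n) - r\<close> by (simp add: u_def)
  have "coherent p u"
    unfolding coherent_def
  proof (intro allI impI)
    fix j k :: nat
    assume "j \<le> k"
    then have "p * p ^ j dvd p * (u k - u j)"
      using coherentD[OF y, of "Suc j" "Suc k"] by (simp add: u right_diff_distrib)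
    then show "p ^ j dvd u k - u j"
      using p1 by simp
  qed
  moreover have "coherent p (\<lambda>n. x (Suc n))"
    using x by (rule coherent_Suc)
  moreover have "p ^ n dvd bq_eval (bq_descend p f r) n (u n) (x (Suc n))" for n
  proof -
    have "p * bq_eval (bq_descend p f r) n (u n) (x (Suc n)) = bq_eval f (Suc n) (x (Suc n)) (y (Suc n))"
      unfolding u using p1 double_root_mod_row_dvd[OF f r] by (simp add: bq_eval_descend)
    then have "p * p ^ n dvd p * bq_eval (bq_descend p f r) n (u n) (x (Suc n))"
      using z[of "Suc n"] by simp
    then show ?thesis
      using p1 by simp
  qed
  ultimately show ?thesis
    unfolding bq_has_zero_def by blast
qed

lemma bq_has_zero_of_simple_root:
  assumes p: "prime p" and f: "quadratic_in_y_mod p f"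
    and simple: "simple_root_mod p (f 0 2 1) (f 0 1 1) (f 0 0 1)"
  shows "bq_has_zero p f"
proof -
  obtain y\<^sub>0 where root: "p dvd f 0 2 1 * y\<^sub>0\<^sup>2 + f 0 1 1 * y\<^sub>0 + f 0 0 1"
    and simple: "\<not> p dvd 2 * f 0 2 1 * y\<^sub>0 + f 0 1 1"
    using simple unfolding simple_root_mod_def by blast
  have "coherent p (f 0 2)" "coherent p (f 0 1)" "coherent p (f 0 0)"
    using quadratic_in_y_modD(1)[OF f] by auto
  from hensel[OF p this root simple]
  obtain y where "coherent p y" "\<And>n. p ^ n dvd f 0 2 n * (y n)\<^sup>2 + f 0 1 n * y n + f 0 0 n"
    by blast
  moreover have "bq_eval f n 0 (y n) = f 0 2 n * (y n)\<^sup>2 + f 0 1 n * y n + f 0 0 n" for n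
    by (simp add: bq_eval_expand)
  ultimately show ?thesis
    unfolding bq_has_zero_def using coherent_const[of p 0] by metis
qed

text \<open>An infinite chain of descents through double roots \<open>r k\<close> yields the zero
  \<open>x = r 1 + p r 3 + p\<^sup>2 r 5 + \<dots>\<close>, \<open>y = r 0 + p r 2 + p\<^sup>2 r 4 + \<dots>\<close> of the first form.\<close>

lemma bq_has_zero_of_descent_chain:
  assumes p: "p > 1" and f: "\<And>k. quadratic_in_y_mod p (f k)"
    and r: "\<And>k. double_root_mod p (f k 0 2 1) (f k 0 1 1) (f k 0 0 1) (r k)"
    and chain: "\<And>k i j n. i \<le> 2 \<Longrightarrow> j \<le> 2 \<Longrightarrow> f (Suc k) i j n = bq_descend p (f k) (r k) i j n"
  shows "bq_has_zero p (f 0)"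
proof -
  define z where "z j n = (\<Sum>i<n. p ^ i * r (j + 2 * i))" for j n
  have z_Suc: "z j (Suc n) = r j + p * z (Suc (Suc j)) n" for j n
  proof -
    have "z j (Suc n) = r j + (\<Sum>i<n. p ^ Suc i * r (j + 2 * Suc i))"
      unfolding z_def by (subst sum.lessThan_Suc_shift) simp
    also have "(\<Sum>i<n. p ^ Suc i * r (j + 2 * Suc i)) = p * z (Suc (Suc j)) n"
      unfolding z_def sum_distrib_left by (intro sum.cong refl) simp
    finally show ?thesis .
  qed
  have z: "coherent p (z j)" for j
    by (rule coherentI) (simp add: z_def)
  have "p ^ n dvd bq_eval (f j) n (z (Suc j) n) (z j n)" for n j
  proof (induction n arbitrary: j)
    case (Suc n)
    have "p ^ n dvd bq_eval (f (Suc j)) n (z (Suc (Suc j)) n) (z (Suc j) (Suc n))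
        - bq_eval (f (Suc j)) n (z (Suc (Suc j)) n) (z (Suc j) n)"
      using coherentD[OF z] by (intro bq_eval_diff_dvd) simp_all
    with Suc.IH[of "Suc j"]
    have "p ^ n dvd bq_eval (f (Suc j)) n (z (Suc (Suc j)) n) (z (Suc j) (Suc n))"
      using dvd_diff_imp_dvd_iff by blast
    moreover have "bq_eval (f (Suc j)) n (z (Suc (Suc j)) n) (z (Suc j) (Suc n))
        = bq_eval (bq_descend p (f j) (r j)) n (z (Suc (Suc j)) n) (z (Suc j) (Suc n))"
      using chain by (intro bq_eval_cong) simp
    moreover have "bq_eval (f j) (Suc n) (z (Suc j) (Suc n)) (z j (Suc n))
        = p * bq_eval (bq_descend p (f j) (r j)) n (z (Suc (Suc j)) n) (z (Suc j) (Suc n))"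
      unfolding z_Suc[of j] using p double_root_mod_row_dvd[OF f r] by (simp add: bq_eval_descend)
    ultimately show ?case by simp
  qed simp
  then show ?thesis
    unfolding bq_has_zero_def using z by blast
qed

section \<open>Admissible forms\<close>

text \<open>The valuation conditions of the theorem on the fixed coefficients, in the coordinates
  \<open>x = X\<^sub>0 / X\<^sub>1\<close>, \<open>y = Y\<^sub>0 / Y\<^sub>1\<close>; the coefficients \<open>f 0 0\<close>, \<open>f 0 1\<close>, \<open>f 1 0\<close> are the random ones.\<close>

definition admissible :: "int \<Rightarrow> biquad \<Rightarrow> bool" where
  "admissible p f \<longleftrightarrow>
    coherent p (f 2 2) \<and> coherent p (f 2 1) \<and> coherent p (f 2 0) \<and>
    coherent p (f 1 2) \<and> coherent p (f 1 1) \<and> coherent p (f 0 2) \<and>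
    p\<^sup>2 dvd f 2 2 2 \<and> p\<^sup>2 dvd f 2 1 2 \<and> p dvd f 2 0 1 \<and> \<not> p\<^sup>2 dvd f 2 0 2 \<and>
    p dvd f 1 2 1 \<and> p dvd f 1 1 1 \<and> \<not> p dvd f 0 2 1"

lemma admissibleD:
  assumes "admissible p f" "1 \<le> n"
  shows "p dvd f 2 2 n" "p dvd f 2 1 n" "p dvd f 2 0 n" "p dvd f 1 2 n" "p dvd f 1 1 n"
    "\<not> p dvd f 0 2 n"
proof -
  have "p dvd p\<^sup>2"
    by (simp add: power2_eq_square)
  with assms show "p dvd f 2 2 n" "p dvd f 2 1 n"
    unfolding admissible_def by (meson coherent_dvd_propagate dvd_trans one_le_numeral)+
  show "p dvd f 2 0 n" "p dvd f 1 2 n" "p dvd f 1 1 n"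
    using assms unfolding admissible_def by (meson coherent_dvd_propagate order_refl)+
  show "\<not> p dvd f 0 2 n"
    using assms unfolding admissible_def by (meson coherent_dvd_propagate order_refl)
qed

lemma admissible_descend:
  assumes p: "p > 1" and f: "admissible p f"
  shows "admissible p (bq_descend p f r)"
proof -
  have coh: "coherent p (f 2 2)" "coherent p (f 2 1)" "coherent p (f 2 0)"
    "coherent p (f 1 2)" "coherent p (f 1 1)" "coherent p (f 0 2)"
    using f unfolding admissible_def by auto
  note dvd = admissibleD[OF f]
  have "coherent p (\<lambda>n. (f 2 0 (Suc n) + r * f 2 1 (Suc n) + r\<^sup>2 * f 2 2 (Suc n)) div p)"
    using p dvd by (intro coherent_div coherent_add coherent_cmult coh) auto
  moreover have "\<not> p dvd (f 2 0 2 + r * f 2 1 2 + r\<^sup>2 * f 2 2 2) div p"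
  proof
    assume quotient: "p dvd (f 2 0 2 + r * f 2 1 2 + r\<^sup>2 * f 2 2 2) div p"
    obtain u v c where "f 2 1 2 = p\<^sup>2 * u" "f 2 2 2 = p\<^sup>2 * v" "f 2 0 2 = p * c"
      using f dvd(3)[of 2] unfolding admissible_def by (auto elim!: dvdE)
    then have "(f 2 0 2 + r * f 2 1 2 + r\<^sup>2 * f 2 2 2) div p = c + p * (r * u + r\<^sup>2 * v)"
      using p by (simp add: power2_eq_square algebra_simps)
    with quotient have "p dvd c"
      by (simp add: dvd_add_left_iff)
    with \<open>f 2 0 2 = p * c\<close> have "p\<^sup>2 dvd f 2 0 2"
      by (simp add: power2_eq_square)
    with f show False
      unfolding admissible_def by blast
  qed
  ultimately show ?thesis
    unfolding admissible_def bq_descend_simps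
  proof (intro conjI)
    show "coherent p (\<lambda>n. p * f 2 2 (Suc n))" "coherent p (\<lambda>n. p * f 1 2 (Suc n))"
      "coherent p (\<lambda>n. p * f 0 2 (Suc n))"
      by (intro coherent_cmult coherent_Suc coh)+
    show "coherent p (\<lambda>n. f 2 1 (Suc n) + 2 * r * f 2 2 (Suc n))"
      "coherent p (\<lambda>n. f 1 1 (Suc n) + 2 * r * f 1 2 (Suc n))"
      by (intro coherent_add coherent_cmult coherent_Suc coh)+
    show "p\<^sup>2 dvd p * f 2 2 (Suc 2)" "p\<^sup>2 dvd p * f 1 2 (Suc 2)"
      using dvd(1,4)[of 3] by (simp_all add: power2_eq_square)
    show "\<not> p\<^sup>2 dvd p * f 0 2 (Suc 2)"
      using dvd(6)[of 3] p by (simp add: power2_eq_square)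
    show "p dvd p * f 0 2 (Suc 1)"
      by simp
    show "p dvd f 2 1 (Suc 1) + 2 * r * f 2 2 (Suc 1)" "p dvd f 1 1 (Suc 1) + 2 * r * f 1 2 (Suc 1)"
      using dvd(1,2,4,5)[of 2] unfolding Suc_1 by (auto intro!: dvd_add dvd_mult)
  qed (simp_all add: numeral_2_eq_2)
qed

text \<open>In the theorem the free coefficients \<open>c\<close>, \<open>b\<close>, \<open>e\<close> are \<open>a\<^sub>1\<^sub>2 / p\<close>, \<open>a\<^sub>2\<^sub>1\<close> and \<open>a\<^sub>2\<^sub>2\<close>.\<close>

definition fill_free :: "int \<Rightarrow> biquad \<Rightarrow> (nat \<Rightarrow> int) \<Rightarrow> (nat \<Rightarrow> int) \<Rightarrow> (nat \<Rightarrow> int) \<Rightarrow> biquad"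
  where "fill_free p f c b e i j =
    (if i = 1 \<and> j = 0 then (\<lambda>n. p * c n) else if i = 0 \<and> j = 1 then b
     else if i = 0 \<and> j = 0 then e else f i j)"

lemma fill_free_simps:
  "fill_free p f c b e 1 0 = (\<lambda>n. p * c n)" "fill_free p f c b e 0 1 = b"
  "fill_free p f c b e 0 0 = e" "fill_free p f c b e 0 2 = f 0 2"
  "fill_free p f c b e 1 1 = f 1 1" "fill_free p f c b e 1 2 = f 1 2"
  "fill_free p f c b e 2 j = f 2 j"
  "fill_free p f c b e (Suc 0) 0 = (\<lambda>n. p * c n)" "fill_free p f c b e 0 (Suc 0) = b"
  "fill_free p f c b e (Suc 0) (Suc 0) = f 1 1" "fill_free p f c b e (Suc 0) 2 = f 1 2"
  by (simp_all add: fill_free_def)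

lemma le_2_cases:
  fixes i :: nat
  assumes "i \<le> 2"
  obtains "i = 0" | "i = 1" | "i = 2"
  using assms by fastforce

lemma quadratic_in_y_mod_fill_free:
  assumes p: "p > 1" and f: "admissible p f"
    and coh: "coherent p c" "coherent p b" "coherent p e"
  shows "quadratic_in_y_mod p (fill_free p f c b e)"
proof -
  have coh_f: "coherent p (f 0 2)" "coherent p (f 1 1)" "coherent p (f 1 2)"
    "coherent p (f 2 0)" "coherent p (f 2 1)" "coherent p (f 2 2)"
    using f unfolding admissible_def by auto
  have "coherent p (fill_free p f c b e i j)" if "i \<le> 2" "j \<le> 2" for i j
    using that by (elim le_2_cases) (simp_all add: fill_free_simps coh coh_f[simplified] coherent_cmult)
  moreover have "p dvd fill_free p f c b e 1 j 1 \<and> p dvd fill_free p f c b e 2 j 1" if "j \<le> 2" for j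
    using that admissibleD[OF f order_refl] by (elim le_2_cases) (simp_all add: fill_free_simps)
  ultimately show ?thesis
    unfolding quadratic_in_y_mod_def by blast
qed

text \<open>The free coefficients of the form obtained by \<open>bq_descend\<close>; since the variables swap,
  the new coefficient of \<open>x\<close> comes from the old coefficient of \<open>y\<close> and vice versa.\<close>

definition descend_c :: "int \<Rightarrow> biquad \<Rightarrow> (nat \<Rightarrow> int) \<Rightarrow> int \<Rightarrow> nat \<Rightarrow> int" where
  "descend_c p f b r n = (b (Suc n) + 2 * r * f 0 2 (Suc n)) div p"

definition descend_b :: "int \<Rightarrow> biquad \<Rightarrow> (nat \<Rightarrow> int) \<Rightarrow> int \<Rightarrow> nat \<Rightarrow> int" where
  "descend_b p f c r n = c (Suc n) + (r * f 1 1 (Suc n) + r\<^sup>2 * f 1 2 (Suc n)) div p"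

definition descend_e :: "int \<Rightarrow> biquad \<Rightarrow> (nat \<Rightarrow> int) \<Rightarrow> (nat \<Rightarrow> int) \<Rightarrow> int \<Rightarrow> nat \<Rightarrow> int" where
  "descend_e p f b e r n = (e (Suc n) + (r * b (Suc n) + r\<^sup>2 * f 0 2 (Suc n))) div p"

lemma fill_free_double_root_dvd:
  assumes p: "p > 1" and f: "admissible p f"
    and coh: "coherent p c" "coherent p b" "coherent p e"
    and r: "double_root_mod p (f 0 2 1) (b 1) (e 1) r"
  shows "p dvd b (Suc n) + 2 * r * f 0 2 (Suc n)"
    and "p dvd e (Suc n) + (r * b (Suc n) + r\<^sup>2 * f 0 2 (Suc n))"
proof -
  note g = quadratic_in_y_mod_fill_free[OF p f coh]
  have r': "double_root_mod p (fill_free p f c b e 0 2 1) (fill_free p f c b e 0 1 1)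
      (fill_free p f c b e 0 0 1) r"
    using r by (simp add: fill_free_simps)
  show "p dvd b (Suc n) + 2 * r * f 0 2 (Suc n)"
    using double_root_mod_slope_dvd[OF g r'] by (simp add: fill_free_simps)
  show "p dvd e (Suc n) + (r * b (Suc n) + r\<^sup>2 * f 0 2 (Suc n))"
    using double_root_mod_row_dvd[OF g r', of 0] by (simp add: fill_free_simps add.assoc)
qed

lemma coherent_descend_free:
  assumes p: "p > 1" and f: "admissible p f"
    and coh: "coherent p c" "coherent p b" "coherent p e"
    and r: "double_root_mod p (f 0 2 1) (b 1) (e 1) r"
  shows "coherent p (descend_c p f b r)" "coherent p (descend_b p f c r)"
    "coherent p (descend_e p f b e r)"
proof -
  have p0: "p \<noteq> 0" using p by simp
  have f02: "coherent p (f 0 2)" and f11: "coherent p (f 1 1)" and f12: "coherent p (f 1 2)"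
    using f unfolding admissible_def by auto
  note dvd = fill_free_double_root_dvd[OF p f coh r]
  have "coherent p (\<lambda>n. b n + 2 * r * f 0 2 n)"
    using coh(2) f02 by (intro coherent_add coherent_cmult)
  from coherent_div[OF p0 this dvd(1)] show "coherent p (descend_c p f b r)"
    by (simp add: descend_c_def[abs_def])
  have "coherent p (\<lambda>n. r * f 1 1 n + r\<^sup>2 * f 1 2 n)"
    using f11 f12 by (intro coherent_add coherent_cmult)
  from coherent_div[OF p0 this] have "coherent p (\<lambda>n. (r * f 1 1 (Suc n) + r\<^sup>2 * f 1 2 (Suc n)) div p)"
    using admissibleD(4,5)[OF f] by simp
  with coherent_Suc[OF coh(1)] show "coherent p (descend_b p f c r)"
    unfolding descend_b_def[abs_def] by (rule coherent_add)
  have "coherent p (\<lambda>n. e n + (r * b n + r\<^sup>2 * f 0 2 n))"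
    using coh(2,3) f02 by (intro coherent_add coherent_cmult)
  from coherent_div[OF p0 this dvd(2)] show "coherent p (descend_e p f b e r)"
    by (simp add: descend_e_def[abs_def])
qed

lemma bq_descend_fill_free:
  assumes p: "p > 1" and f: "admissible p f"
    and coh: "coherent p c" "coherent p b" "coherent p e"
    and r: "double_root_mod p (f 0 2 1) (b 1) (e 1) r"
    and ij: "i \<le> 2" "j \<le> 2"
  shows "bq_descend p (fill_free p f c b e) r i j n
    = fill_free p (bq_descend p f r) (descend_c p f b r) (descend_b p f c r) (descend_e p f b e r) i j n"
proof -
  have p0: "p \<noteq> 0" using p by simp
  have "(p * c (Suc n) + r * f 1 1 (Suc n) + r\<^sup>2 * f 1 2 (Suc n)) div p
      = ((r * f 1 1 (Suc n) + r\<^sup>2 * f 1 2 (Suc n)) + p * c (Suc n)) div p"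
    by (rule arg_cong[where f = "\<lambda>z. z div p"]) (simp add: algebra_simps)
  also have "\<dots> = c (Suc n) + (r * f 1 1 (Suc n) + r\<^sup>2 * f 1 2 (Suc n)) div p"
    using div_mult_self2[OF p0] by simp
  finally have descend_b: "(p * c (Suc n) + r * f 1 1 (Suc n) + r\<^sup>2 * f 1 2 (Suc n)) div p
      = descend_b p f c r n"
    unfolding descend_b_def .
  from ij descend_b fill_free_double_root_dvd[OF p f coh r] show ?thesis
    by (elim le_2_cases)
      (simp_all add: fill_free_simps bq_descend_def descend_c_def descend_e_def add.assoc)
qed

lemma bq_has_zero_descend_fill_free_iff:
  assumes p: "p > 1" and f: "admissible p f"
    and coh: "coherent p c" "coherent p b" "coherent p e"
    and r: "double_root_mod p (f 0 2 1) (b 1) (e 1) r"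
  shows "bq_has_zero p (bq_descend p (fill_free p f c b e) r) \<longleftrightarrow>
    bq_has_zero p (fill_free p (bq_descend p f r) (descend_c p f b r) (descend_b p f c r)
      (descend_e p f b e r))"
  by (rule bq_has_zero_cong) (simp add: bq_descend_fill_free[OF assms])

section \<open>The descent recursion\<close>

text \<open>\<open>survives p m f c b e\<close> says that the free coefficients, known only modulo \<open>p ^ m\<close>, do not
  rule out a zero within \<open>m\<close> descent steps: either a simple root occurs or a double root leads to
  a form that survives \<open>m - 1\<close> further steps. Working with residues makes the survivors countable.\<close>

fun survives :: "int \<Rightarrow> nat \<Rightarrow> biquad \<Rightarrow> int \<Rightarrow> int \<Rightarrow> int \<Rightarrow> bool" where
  "survives p 0 f c b e = True"
| "survives p (Suc m) f c b e =
    (simple_root_mod p (f 0 2 1) b e \<or>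
     (\<exists>r\<in>{0..<p}. double_root_mod p (f 0 2 1) b e r \<and>
        survives p m (bq_descend p f r) (((b + 2 * r * f 0 2 (Suc m)) div p) mod p ^ m)
          ((c + (r * f 1 1 (Suc m) + r\<^sup>2 * f 1 2 (Suc m)) div p) mod p ^ m)
          (((e + (r * b + r\<^sup>2 * f 0 2 (Suc m))) div p) mod p ^ m)))"

lemma div_mod_power_cong:
  fixes p x x' :: int
  assumes "p > 0" "p ^ Suc k dvd x - x'"
  shows "(x div p) mod p ^ k = (x' div p) mod p ^ k"
proof -
  obtain q where "x - x' = p ^ Suc k * q"
    using assms(2) by blast
  then have "x = x' + p * (p ^ k * q)"
    by (simp add: algebra_simps)
  then have "x div p = p ^ k * q + x' div p"
    using assms(1) by simp
  then show ?thesis by simp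
qed

lemma survives_mod:
  assumes "p > 0"
  shows "survives p m f c b e = survives p m f (c mod p ^ m) (b mod p ^ m) (e mod p ^ m)"
proof (cases m)
  case (Suc k)
  have mod_p: "p dvd b - b mod p ^ m" "p dvd e - e mod p ^ m"
    using Suc by (simp_all add: dvd_diff_mod)
  have "((b + x) div p) mod p ^ k = ((b mod p ^ m + x) div p) mod p ^ k" for x
    using Suc assms by (intro div_mod_power_cong) (simp_all add: minus_mod_eq_mult_div[symmetric])
  moreover have "(c + x) mod p ^ k = (c mod p ^ m + x) mod p ^ k" for x
  proof -
    have "p ^ k dvd c - c mod p ^ m"
      using Suc by (intro dvd_diff_mod) (simp add: le_imp_power_dvd)
    then show ?thesis by (simp add: mod_eq_dvd_iff)
  qed
  moreover have "((e + (r * b + x)) div p) mod p ^ k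
      = ((e mod p ^ m + (r * (b mod p ^ m) + x)) div p) mod p ^ k" for r x
  proof (intro div_mod_power_cong assms)
    have "e + (r * b + x) - (e mod p ^ m + (r * (b mod p ^ m) + x))
        = (e - e mod p ^ m) + r * (b - b mod p ^ m)"
      by (simp add: algebra_simps)
    also have "p ^ Suc k dvd \<dots>"
      using Suc by (simp add: minus_mod_eq_mult_div[symmetric])
    finally show "p ^ Suc k dvd e + (r * b + x) - (e mod p ^ m + (r * (b mod p ^ m) + x))" .
  qed
  ultimately show ?thesis
    unfolding Suc survives.simps
    using simple_root_mod_cong[OF mod_p[unfolded Suc]] double_root_mod_cong[OF mod_p[unfolded Suc]]
    by simp
qed simp

lemma survives_Suc_coherent:
  assumes "p > 0" "coherent p b" "coherent p e"
  shows "survives p (Suc m) f (c (Suc m)) (b (Suc m)) (e (Suc m)) \<longleftrightarrow>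
    simple_root_mod p (f 0 2 1) (b 1) (e 1) \<or>
    (\<exists>r\<in>{0..<p}. double_root_mod p (f 0 2 1) (b 1) (e 1) r \<and>
       survives p m (bq_descend p f r) (descend_c p f b r m) (descend_b p f c r m)
         (descend_e p f b e r m))"
proof -
  have "p dvd b (Suc m) - b 1" "p dvd e (Suc m) - e 1"
    using coherentD[OF assms(2), of 1 "Suc m"] coherentD[OF assms(3), of 1 "Suc m"] by simp_all
  note level_1 = simple_root_mod_cong[OF this] double_root_mod_cong[OF this]
  have "survives p m (bq_descend p f r) (descend_c p f b r m) (descend_b p f c r m)
        (descend_e p f b e r m)
      = survives p m (bq_descend p f r) (descend_c p f b r m mod p ^ m)
        (descend_b p f c r m mod p ^ m) (descend_e p f b e r m mod p ^ m)" for r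
    by (rule survives_mod[OF assms(1)])
  then show ?thesis
    unfolding survives.simps level_1 by (simp add: descend_c_def descend_b_def descend_e_def)
qed

section \<open>Counting the survivors\<close>

definition survivors :: "int \<Rightarrow> nat \<Rightarrow> biquad \<Rightarrow> int" where
  "survivors p m f =
    (\<Sum>c\<in>{0..<p ^ m}. \<Sum>b\<in>{0..<p ^ m}. \<Sum>e\<in>{0..<p ^ m}. of_bool (survives p m f c b e))"

lemma of_bool_survives_Suc:
  fixes p c b e :: int and f :: biquad and m :: nat
  assumes p: "prime p" and a: "\<not> p dvd f 0 2 1"
  defines "S r \<equiv> survives p m (bq_descend p f r) (((b + 2 * r * f 0 2 (Suc m)) div p) mod p ^ m)
    ((c + (r * f 1 1 (Suc m) + r\<^sup>2 * f 1 2 (Suc m)) div p) mod p ^ m)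
    (((e + (r * b + r\<^sup>2 * f 0 2 (Suc m))) div p) mod p ^ m)"
  shows "of_bool (survives p (Suc m) f c b e) = (of_bool (simple_root_mod p (f 0 2 1) b e) :: int)
    + (\<Sum>r\<in>{0..<p}. of_bool (double_root_mod p (f 0 2 1) b e r) * of_bool (S r))"
proof (cases "simple_root_mod p (f 0 2 1) b e")
  case True
  then show ?thesis
    using simple_root_mod_imp_not_double[OF p a] by simp
next
  case False
  then have "of_bool (survives p (Suc m) f c b e)
      = (of_bool (\<exists>r\<in>{0..<p}. double_root_mod p (f 0 2 1) b e r \<and> S r) :: int)"
    unfolding S_def by simp
  also have "\<dots> = (\<Sum>r\<in>{0..<p}. of_bool (double_root_mod p (f 0 2 1) b e r \<and> S r))"
    by (rule of_bool_bex_eq_sum) (auto intro: double_root_mod_unique[OF p a])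
  also have "\<dots> = (\<Sum>r\<in>{0..<p}. of_bool (double_root_mod p (f 0 2 1) b e r) * of_bool (S r))"
    by (simp only: of_bool_conj)
  finally show ?thesis
    using False by (simp only: of_bool_eq add_0_left)
qed

lemma sum_simple_root_part:
  fixes p a :: int
  assumes p: "p > 0"
  shows "(\<Sum>c\<in>{0..<p ^ Suc m}. \<Sum>b\<in>{0..<p ^ Suc m}. \<Sum>e\<in>{0..<p ^ Suc m}.
      of_bool (simple_root_mod p a b e) :: int)
    = p ^ Suc m * p ^ m * p ^ m * (\<Sum>b\<in>{0..<p}. \<Sum>e\<in>{0..<p}. of_bool (simple_root_mod p a b e))"
proof -
  have "(\<Sum>e\<in>{0..<p ^ Suc m}. of_bool (simple_root_mod p a b e) :: int)
      = p ^ m * (\<Sum>e\<in>{0..<p}. of_bool (simple_root_mod p a b e))" for b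
    using p by (rule sum_periodic) (simp add: simple_root_mod_mod)
  moreover have "(\<Sum>b\<in>{0..<p ^ Suc m}. \<Sum>e\<in>{0..<p}. of_bool (simple_root_mod p a b e) :: int)
      = p ^ m * (\<Sum>b\<in>{0..<p}. \<Sum>e\<in>{0..<p}. of_bool (simple_root_mod p a b e))"
    using p by (rule sum_periodic) (simp add: simple_root_mod_mod)
  ultimately show ?thesis
    using p by (simp add: sum_distrib_left[symmetric] mult.assoc)
qed

lemma sum_swap_innermost:
  "(\<Sum>c\<in>C. \<Sum>b\<in>B. \<Sum>e\<in>E. \<Sum>r\<in>R. g c b e r) = (\<Sum>r\<in>R. \<Sum>c\<in>C. \<Sum>b\<in>B. \<Sum>e\<in>E. g c b e r)"
proof -
  have "(\<Sum>b\<in>B. \<Sum>e\<in>E. \<Sum>r\<in>R. g c b e r) = (\<Sum>r\<in>R. \<Sum>b\<in>B. \<Sum>e\<in>E. g c b e r)" for c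
  proof -
    have "(\<Sum>b\<in>B. \<Sum>e\<in>E. \<Sum>r\<in>R. g c b e r) = (\<Sum>b\<in>B. \<Sum>r\<in>R. \<Sum>e\<in>E. g c b e r)"
      by (intro sum.cong refl sum.swap)
    also have "\<dots> = (\<Sum>r\<in>R. \<Sum>b\<in>B. \<Sum>e\<in>E. g c b e r)"
      by (rule sum.swap)
    finally show ?thesis .
  qed
  then have "(\<Sum>c\<in>C. \<Sum>b\<in>B. \<Sum>e\<in>E. \<Sum>r\<in>R. g c b e r) = (\<Sum>c\<in>C. \<Sum>r\<in>R. \<Sum>b\<in>B. \<Sum>e\<in>E. g c b e r)"
    by simp
  also have "\<dots> = (\<Sum>r\<in>R. \<Sum>c\<in>C. \<Sum>b\<in>B. \<Sum>e\<in>E. g c b e r)"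
    by (rule sum.swap)
  finally show ?thesis .
qed

text \<open>For a fixed double root \<open>r\<close> the free coefficients of the descended form run through all
  residues modulo \<open>p ^ m\<close> exactly \<open>p\<close> times each; this is the measure preservation of the
  descent.\<close>

lemma sum_double_root_part:
  fixes p a A K r :: int and W :: "int \<Rightarrow> int \<Rightarrow> int \<Rightarrow> int"
  assumes p: "p > 0"
  shows "(\<Sum>c\<in>{0..<p ^ Suc m}. \<Sum>b\<in>{0..<p ^ Suc m}. \<Sum>e\<in>{0..<p ^ Suc m}.
      of_bool (double_root_mod p a b e r) * W (((b + 2 * r * A) div p) mod p ^ m)
        ((c + K) mod p ^ m) (((e + (r * b + r\<^sup>2 * A)) div p) mod p ^ m))
    = p * (\<Sum>x\<in>{0..<p ^ m}. \<Sum>c\<in>{0..<p ^ m}. \<Sum>z\<in>{0..<p ^ m}. W x c z)"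
proof -
  define Q where "Q = p ^ m"
  define D where "D b e = (of_bool (double_root_mod p a b e r) :: int)" for b e
  have D_mod: "D (b mod p) = D b" "D b (e mod p) = D b e" for b e
    by (simp_all add: D_def fun_eq_iff double_root_mod_mod)
  define X where "X b = ((b + 2 * r * A) div p) mod Q" for b
  define Z where "Z b e = ((e + (r * b + r\<^sup>2 * A)) div p) mod Q" for b e
  define H where "H x z = (\<Sum>c\<in>{0..<Q}. W x c z)" for x z
  have "(\<Sum>c\<in>{0..<p ^ Suc m}. \<Sum>b\<in>{0..<p ^ Suc m}. \<Sum>e\<in>{0..<p ^ Suc m}.
        D b e * W (X b) ((c + K) mod Q) (Z b e))
      = (\<Sum>b\<in>{0..<p ^ Suc m}. \<Sum>c\<in>{0..<p ^ Suc m}. \<Sum>e\<in>{0..<p ^ Suc m}.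
        D b e * W (X b) ((c + K) mod Q) (Z b e))"
    by (rule sum.swap)
  also have "\<dots> = (\<Sum>b\<in>{0..<p ^ Suc m}. \<Sum>e\<in>{0..<p ^ Suc m}. \<Sum>c\<in>{0..<p ^ Suc m}.
        D b e * W (X b) ((c + K) mod Q) (Z b e))"
    by (intro sum.cong refl sum.swap)
  also have "\<dots> = (\<Sum>b\<in>{0..<p ^ Suc m}. \<Sum>e\<in>{0..<p ^ Suc m}. D b e *
          (\<Sum>c\<in>{0..<p ^ Suc m}. W (X b) ((c + K) mod Q) (Z b e)))"
    by (simp only: sum_distrib_left)
  also have "\<dots> = p * (\<Sum>b\<in>{0..<p ^ Suc m}. \<Sum>e\<in>{0..<p ^ Suc m}. D b e * H (X b) (Z b e))"
  proof -
    have "(\<Sum>c\<in>{0..<p ^ Suc m}. W (X b) ((c + K) mod Q) (Z b e)) = p * H (X b) (Z b e)" for b e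
      unfolding H_def Q_def by (rule sum_mod_power_Suc[OF p, where h = "\<lambda>c. W (X b) c (Z b e)"])
    then show ?thesis
      by (simp add: sum_distrib_left mult.left_commute)
  qed
  also have "(\<Sum>b\<in>{0..<p ^ Suc m}. \<Sum>e\<in>{0..<p ^ Suc m}. D b e * H (X b) (Z b e))
      = (\<Sum>b\<in>{0..<p ^ Suc m}. (\<Sum>e\<in>{0..<p}. D b e) * (\<Sum>z\<in>{0..<Q}. H (X b) z))"
    unfolding Z_def Q_def using p
    by (intro sum.cong refl sum_split_low_digit) (simp_all add: D_mod)
  also have "\<dots> = (\<Sum>b\<in>{0..<p}. \<Sum>e\<in>{0..<p}. D b e) * (\<Sum>x\<in>{0..<Q}. \<Sum>z\<in>{0..<Q}. H x z)"
    unfolding X_def Q_def using p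
    by (intro sum_split_low_digit[where F = "\<lambda>b. \<Sum>e\<in>{0..<p}. D b e"]) (simp_all add: D_mod)
  also have "(\<Sum>b\<in>{0..<p}. \<Sum>e\<in>{0..<p}. D b e) = 1"
    unfolding D_def using p by (rule sum_double_root_mod_at)
  also have "(\<Sum>x\<in>{0..<Q}. \<Sum>z\<in>{0..<Q}. H x z) = (\<Sum>x\<in>{0..<Q}. \<Sum>c\<in>{0..<Q}. \<Sum>z\<in>{0..<Q}. W x c z)"
    unfolding H_def by (intro sum.cong refl sum.swap)
  finally show ?thesis
    unfolding D_def X_def Z_def Q_def by (simp only: mult_1)
qed

lemma two_survivors:
  assumes p: "prime p" and f: "admissible p f"
  shows "2 * survivors p m f = p ^ (3 * m) + p ^ (2 * m)"
  using f
proof (induction m arbitrary: f)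
  case 0
  have "{0..<(1::int)} = {0}" by auto
  then show ?case by (simp add: survivors_def)
next
  case (Suc m)
  have p0: "p > 0" using p prime_gt_0_int by blast
  have a: "\<not> p dvd f 0 2 1"
    using Suc.prems unfolding admissible_def by blast
  define Ss where "Ss = (\<Sum>b\<in>{0..<p}. \<Sum>e\<in>{0..<p}. of_bool (simple_root_mod p (f 0 2 1) b e) :: int)"
  define W where "W r x c z = (of_bool (survives p m (bq_descend p f r) x c z) :: int)" for r x c z
  have "survivors p (Suc m) f
      = p ^ Suc m * p ^ m * p ^ m * Ss + (\<Sum>r\<in>{0..<p}. p * survivors p m (bq_descend p f r))"
    unfolding survivors_def of_bool_survives_Suc[where f = f, OF p a] W_def[symmetric] sum.distrib
      sum_swap_innermost sum_simple_root_part[OF p0] sum_double_root_part[OF p0] Ss_def ..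
  then have "2 * survivors p (Suc m) f
      = p ^ Suc m * p ^ m * p ^ m * (2 * Ss) + (\<Sum>r\<in>{0..<p}. p * (2 * survivors p m (bq_descend p f r)))"
    by (simp add: sum_distrib_left algebra_simps)
  also have "\<dots> = p ^ Suc m * p ^ m * p ^ m * (p\<^sup>2 - p) + p * p * (p ^ (3 * m) + p ^ (2 * m))"
    using Suc.IH[OF admissible_descend[OF prime_gt_1_int[OF p] Suc.prems]]
      sum_simple_root_mod[OF p a] p0
    unfolding Ss_def by simp
  also have "\<dots> = p ^ (3 * Suc m) + p ^ (2 * Suc m)"
  proof -
    have pow: "p ^ (k * n) = (p ^ n) ^ k" for k n
      by (simp add: power_mult[symmetric] mult.commute)
    show ?thesis
      unfolding pow power_Suc by (simp add: power2_eq_square power3_eq_cube algebra_simps)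
  qed
  finally show ?case .
qed

section \<open>Zeros and the descent recursion\<close>

lemma survives_Suc_imp:
  assumes p: "prime p"
  shows "admissible p f \<Longrightarrow> coherent p c \<Longrightarrow> coherent p b \<Longrightarrow> coherent p e \<Longrightarrow>
    survives p (Suc m) f (c (Suc m)) (b (Suc m)) (e (Suc m)) \<Longrightarrow> survives p m f (c m) (b m) (e m)"
proof (induction m arbitrary: f c b e)
  case (Suc m)
  have p1: "p > 1" using p prime_gt_1_int by blast
  have p0: "p > 0" using p1 by simp
  note step = survives_Suc_coherent[OF p0 Suc.prems(3,4)]
  show ?case
    unfolding step
  proof (cases "simple_root_mod p (f 0 2 1) (b 1) (e 1)")
    case False
    then obtain r where r: "r \<in> {0..<p}" "double_root_mod p (f 0 2 1) (b 1) (e 1) r"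
      and "survives p (Suc m) (bq_descend p f r) (descend_c p f b r (Suc m))
        (descend_b p f c r (Suc m)) (descend_e p f b e r (Suc m))"
      using Suc.prems(5) unfolding step by blast
    with Suc.IH[OF admissible_descend[OF p1 Suc.prems(1)] coherent_descend_free[OF p1 Suc.prems(1-4) r(2)]]
    show "simple_root_mod p (f 0 2 1) (b 1) (e 1) \<or>
      (\<exists>r\<in>{0..<p}. double_root_mod p (f 0 2 1) (b 1) (e 1) r \<and>
        survives p m (bq_descend p f r) (descend_c p f b r m) (descend_b p f c r m) (descend_e p f b e r m))"
      by blast
  qed blast
qed simp

lemma survives_of_bq_has_zero:
  assumes p: "prime p"
  shows "admissible p f \<Longrightarrow> coherent p c \<Longrightarrow> coherent p b \<Longrightarrow> coherent p e \<Longrightarrow>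
    bq_has_zero p (fill_free p f c b e) \<Longrightarrow> survives p m f (c m) (b m) (e m)"
proof (induction m arbitrary: f c b e)
  case (Suc m)
  have p1: "p > 1" using p prime_gt_1_int by blast
  then have p0: "p > 0" by simp
  note g = quadratic_in_y_mod_fill_free[OF p1 Suc.prems(1-4)]
  obtain y where "y \<in> {0..<p}"
    "p dvd fill_free p f c b e 0 2 1 * y\<^sup>2 + fill_free p f c b e 0 1 1 * y + fill_free p f c b e 0 0 1"
    by (rule bq_has_zero_imp_root_mod[OF g p0 Suc.prems(5)])
  note y = this[unfolded fill_free_simps]
  have "simple_root_mod p (f 0 2 1) (b 1) (e 1) \<or>
    (\<exists>r\<in>{0..<p}. double_root_mod p (f 0 2 1) (b 1) (e 1) r \<and>
      survives p m (bq_descend p f r) (descend_c p f b r m) (descend_b p f c r m) (descend_e p f b e r m))"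
  proof (cases "p dvd 2 * f 0 2 1 * y + b 1")
    case False
    with y show ?thesis
      unfolding simple_root_mod_def by blast
  next
    case True
    with y have r: "double_root_mod p (f 0 2 1) (b 1) (e 1) y"
      unfolding double_root_mod_def by blast
    then have "bq_has_zero p (bq_descend p (fill_free p f c b e) y)"
      using bq_has_zero_descend[OF p g _ _ Suc.prems(5)] admissibleD(6)[OF Suc.prems(1) order_refl]
      by (simp add: fill_free_simps)
    then have "survives p m (bq_descend p f y) (descend_c p f b y m) (descend_b p f c y m)
        (descend_e p f b e y m)"
      unfolding bq_has_zero_descend_fill_free_iff[OF p1 Suc.prems(1-4) r]
      by (rule Suc.IH[OF admissible_descend[OF p1 Suc.prems(1)] coherent_descend_free[OF p1 Suc.prems(1-4) r]])
    with r y show ?thesis by blast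
  qed
  then show ?case
    unfolding survives_Suc_coherent[OF p0 Suc.prems(3,4)] .
qed simp

text \<open>A would-be counterexample to the converse of \<open>survives_of_bq_has_zero\<close>; it propagates along
  the descent, which is impossible by \<open>bq_has_zero_of_descent_chain\<close>.\<close>

definition zero_free_survivor :: "int \<Rightarrow> biquad \<Rightarrow> (nat \<Rightarrow> int) \<Rightarrow> (nat \<Rightarrow> int) \<Rightarrow> (nat \<Rightarrow> int) \<Rightarrow> bool"
  where "zero_free_survivor p f c b e \<longleftrightarrow>
    admissible p f \<and> coherent p c \<and> coherent p b \<and> coherent p e \<and>
    (\<forall>m. survives p m f (c m) (b m) (e m)) \<and> \<not> bq_has_zero p (fill_free p f c b e)"

lemma zero_free_survivor_descend:
  assumes p: "prime p" and start: "zero_free_survivor p f c b e"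
  obtains r where "double_root_mod p (f 0 2 1) (b 1) (e 1) r"
    and "zero_free_survivor p (bq_descend p f r) (descend_c p f b r) (descend_b p f c r)
      (descend_e p f b e r)"
proof -
  have p1: "p > 1" using p prime_gt_1_int by blast
  then have p0: "p > 0" by simp
  have f: "admissible p f" and coh: "coherent p c" "coherent p b" "coherent p e"
    and surv: "\<And>m. survives p m f (c m) (b m) (e m)"
    and no_zero: "\<not> bq_has_zero p (fill_free p f c b e)"
    using start unfolding zero_free_survivor_def by auto
  note g = quadratic_in_y_mod_fill_free[OF p1 f coh]
  \<comment> \<open>a simple root would give a zero by Hensel's lemma\<close>
  have "\<not> simple_root_mod p (f 0 2 1) (b 1) (e 1)"
    using bq_has_zero_of_simple_root[OF p g] no_zero by (auto simp: fill_free_simps)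
  then have next_level: "\<exists>r\<in>{0..<p}. double_root_mod p (f 0 2 1) (b 1) (e 1) r \<and>
      survives p m (bq_descend p f r) (descend_c p f b r m) (descend_b p f c r m) (descend_e p f b e r m)"
    for m
    using surv[of "Suc m"] unfolding survives_Suc_coherent[OF p0 coh(2,3)] by blast
  then obtain r where r: "r \<in> {0..<p}" "double_root_mod p (f 0 2 1) (b 1) (e 1) r"
    by blast
  \<comment> \<open>the double root is unique, so the same \<open>r\<close> serves every level\<close>
  have "survives p m (bq_descend p f r) (descend_c p f b r m) (descend_b p f c r m)
      (descend_e p f b e r m)" for m
    using next_level[of m] double_root_mod_unique[OF p admissibleD(6)[OF f order_refl] _ r(2) _ r(1)]
    by blast
  moreover have "\<not> bq_has_zero p (fill_free p (bq_descend p f r) (descend_c p f b r)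
      (descend_b p f c r) (descend_e p f b e r))"
    using bq_has_zero_of_descend[OF p1 g] r(2) no_zero
    unfolding bq_has_zero_descend_fill_free_iff[OF p1 f coh r(2), symmetric]
    by (auto simp: fill_free_simps)
  ultimately show ?thesis
    using that r(2) admissible_descend[OF p1 f] coherent_descend_free[OF p1 f coh r(2)]
    unfolding zero_free_survivor_def by blast
qed

lemma bq_has_zero_of_survives:
  assumes p: "prime p" and f: "admissible p f"
    and coh: "coherent p c" "coherent p b" "coherent p e"
    and surv: "\<And>m. survives p m f (c m) (b m) (e m)"
  shows "bq_has_zero p (fill_free p f c b e)"
proof (rule ccontr)
  assume "\<not> bq_has_zero p (fill_free p f c b e)"
  with f coh surv have start: "zero_free_survivor p f c b e"
    unfolding zero_free_survivor_def by blast
  have p1: "p > 1" using p prime_gt_1_int by blast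
  define good where "good = (\<lambda>(f, c, b, e). zero_free_survivor p f c b e)"
  define root :: "biquad \<times> (nat \<Rightarrow> int) \<times> (nat \<Rightarrow> int) \<times> (nat \<Rightarrow> int) \<Rightarrow> int \<Rightarrow> bool"
    where "root = (\<lambda>(f, c, b, e). double_root_mod p (f 0 2 1) (b 1) (e 1))"
  define step where "step = (\<lambda>r (f, c, b, e).
    (bq_descend p f r, descend_c p f b r, descend_b p f c r, descend_e p f b e r))"
  have "\<exists>r. root s r \<and> good (step r s)" if "good s" for s
  proof -
    obtain f c b e where s: "s = (f, c, b, e)" by (cases s)
    with that have "zero_free_survivor p f c b e"
      unfolding good_def by simp
    then obtain r where "double_root_mod p (f 0 2 1) (b 1) (e 1) r" "zero_free_survivor p
        (bq_descend p f r) (descend_c p f b r) (descend_b p f c r) (descend_e p f b e r)"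
      by (rule zero_free_survivor_descend[OF p])
    with s show ?thesis
      unfolding good_def root_def step_def by auto
  qed
  then obtain R where R: "\<And>s. good s \<Longrightarrow> root s (R s) \<and> good (step (R s) s)"
    by metis
  define state where "state k = ((\<lambda>s. step (R s) s) ^^ k) (f, c, b, e)" for k
  have good: "good (state k)" for k
    by (induction k) (use start R in \<open>auto simp: state_def good_def\<close>)
  define form where "form = (\<lambda>(f, c, b, e). fill_free p f c b e)"
  have "bq_has_zero p (form (state 0))"
  proof (rule bq_has_zero_of_descent_chain[OF p1])
    fix k
    obtain f' c' b' e' where s: "state k = (f', c', b', e')" by (cases "state k")
    have f': "admissible p f'" and coh': "coherent p c'" "coherent p b'" "coherent p e'"
      using good[of k] unfolding s good_def zero_free_survivor_def by auto
    have r: "double_root_mod p (f' 0 2 1) (b' 1) (e' 1) (R (state k))"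
      using R[OF good[of k]] unfolding s root_def by simp
    show "quadratic_in_y_mod p (form (state k))"
      unfolding s form_def using quadratic_in_y_mod_fill_free[OF p1 f' coh'] by simp
    show "double_root_mod p (form (state k) 0 2 1) (form (state k) 0 1 1) (form (state k) 0 0 1)
        (R (state k))"
      using r s by (simp add: form_def fill_free_simps)
    show "form (state (Suc k)) i j n = bq_descend p (form (state k)) (R (state k)) i j n"
      if "i \<le> 2" "j \<le> 2" for i j n
      using bq_descend_fill_free[OF p1 f' coh' r that, of n] s
      by (simp add: state_def form_def step_def)
  qed
  with start show False
    by (simp add: state_def form_def zero_free_survivor_def)
qed

section \<open>Digit sequences\<close>

lemma zp_trunc_0 [simp]: "zp_trunc P d 0 = 0"
  by (simp add: zp_trunc_def)

lemma zp_trunc_Suc: "zp_trunc P d (Suc n) = zp_trunc P d n + int (d n) * int P ^ n"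
  by (simp add: zp_trunc_def)

lemma coherent_zp_trunc: "coherent (int P) (zp_trunc P d)"
  by (rule coherentI) (simp add: zp_trunc_Suc)

lemma zp_trunc_range:
  assumes "d \<in> Zp P"
  shows "zp_trunc P d n \<in> {0..<int P ^ n}"
proof (induction n)
  case (Suc n)
  have "int (d n) \<le> int P - 1"
    using assms unfolding Zp_def by force
  then have "int (d n) * int P ^ n \<le> (int P - 1) * int P ^ n"
    by (intro mult_right_mono) auto
  with Suc show ?case
    by (simp add: zp_trunc_Suc algebra_simps)
qed simp

lemma zp_trunc_cong: "(\<And>i. i < n \<Longrightarrow> d i = d' i) \<Longrightarrow> zp_trunc P d n = zp_trunc P d' n"
  unfolding zp_trunc_def by (intro sum.cong) auto

lemma zp_digit_eq:
  assumes P: "P > 1" and d: "d \<in> Zp P" and i: "i < n"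
  shows "int (d i) = (zp_trunc P d n div int P ^ i) mod int P"
  using i
proof (induction n)
  case (Suc n)
  have P0: "int P > 0" using P by simp
  show ?case
  proof (cases "i = n")
    case True
    have "zp_trunc P d i div int P ^ i = 0"
      using zp_trunc_range[OF d, of i] by simp
    then have "zp_trunc P d (Suc i) div int P ^ i = int (d i)"
      unfolding zp_trunc_Suc using P0 by simp
    with True d show ?thesis
      unfolding Zp_def by simp
  next
    case False
    with Suc.prems obtain k where k: "n = i + Suc k"
      using less_imp_Suc_add by fastforce
    then have "zp_trunc P d (Suc n) = zp_trunc P d n + (int (d n) * int P ^ Suc k) * int P ^ i"
      by (simp add: zp_trunc_Suc power_add algebra_simps)
    then have "zp_trunc P d (Suc n) div int P ^ i = int (d n) * int P ^ Suc k + zp_trunc P d n div int P ^ i"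
      using P0 by simp
    then have "(zp_trunc P d (Suc n) div int P ^ i) mod int P = (zp_trunc P d n div int P ^ i) mod int P"
      by (simp add: mod_add_left_eq[symmetric])
    with Suc.IH False Suc.prems show ?thesis by simp
  qed
qed simp

definition digits_of :: "nat \<Rightarrow> (nat \<Rightarrow> int) \<Rightarrow> nat \<Rightarrow> nat" where
  "digits_of P s i = nat ((s (Suc i) div int P ^ i) mod int P)"

lemma digits_of_in_Zp: "P > 1 \<Longrightarrow> digits_of P s \<in> Zp P"
  unfolding Zp_def digits_of_def by (auto simp: nat_less_iff)

lemma zp_trunc_digits_of:
  assumes P: "P > 1" and s: "coherent (int P) s"
  shows "zp_trunc P (digits_of P s) n = s n mod int P ^ n"
proof (induction n)
  case (Suc n)
  have "s (Suc n) mod int P ^ n = s n mod int P ^ n"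
    using coherentD[OF s, of n "Suc n"] by (simp add: mod_eq_dvd_iff)
  moreover have "s (Suc n) mod int P ^ Suc n
      = int P ^ n * (s (Suc n) div int P ^ n mod int P) + s (Suc n) mod int P ^ n"
    using zmod_zmult2_eq[of "int P" "s (Suc n)" "int P ^ n"] by (simp add: mult.commute)
  moreover have "int (digits_of P s n) = s (Suc n) div int P ^ n mod int P"
    unfolding digits_of_def using P by simp
  ultimately show ?case
    using Suc by (simp add: zp_trunc_Suc algebra_simps)
qed simp

lemma zp_trunc_mult_p: "zp_trunc P (zp_mult_p c) (Suc n) = int P * zp_trunc P c n"
  by (induction n) (simp_all add: zp_trunc_Suc zp_mult_p_def algebra_simps)

lemma zp_val_ge_imp_digit_eq_0:
  assumes "enat k \<le> zp_val d" "i < k"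
  shows "d i = 0"
proof (cases "\<forall>i. d i = 0")
  case False
  then have "zp_val d = enat (LEAST i. d i \<noteq> 0)"
    unfolding zp_val_def by (rule if_not_P)
  with assms have "i < (LEAST i. d i \<noteq> 0)"
    by simp
  then show ?thesis
    using not_less_Least by blast
qed simp

lemma zp_val_eq_imp_digit_neq_0:
  assumes "zp_val d = enat k"
  shows "d k \<noteq> 0"
proof -
  have ex: "\<not> (\<forall>i. d i = 0)"
  proof
    assume "\<forall>i. d i = 0"
    then have "zp_val d = \<infinity>"
      unfolding zp_val_def by simp
    with assms show False by simp
  qed
  then have "zp_val d = enat (LEAST i. d i \<noteq> 0)"
    unfolding zp_val_def by (rule if_not_P)
  with assms have "(LEAST i. d i \<noteq> 0) = k"
    by simp
  with LeastI_ex[of "\<lambda>i. d i \<noteq> 0"] ex show ?thesis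
    by auto
qed

section \<open>Primitive zeros\<close>

definition bq_hom_eval :: "biquad \<Rightarrow> nat \<Rightarrow> int \<Rightarrow> int \<Rightarrow> int \<Rightarrow> int \<Rightarrow> int" where
  "bq_hom_eval f n x\<^sub>0 x\<^sub>1 y\<^sub>0 y\<^sub>1 =
    (\<Sum>i\<le>2. \<Sum>j\<le>2. f i j n * x\<^sub>0 ^ i * x\<^sub>1 ^ (2 - i) * y\<^sub>0 ^ j * y\<^sub>1 ^ (2 - j))"

text \<open>The index reversal \<open>i \<mapsto> 2 - i\<close> turns \<open>a\<^sub>i\<^sub>j X\<^sub>0\<^bsup>2-i\<^esup> X\<^sub>1\<^sup>i Y\<^sub>0\<^bsup>2-j\<^esup> Y\<^sub>1\<^sup>j\<close> into the
  convention of \<open>bq_eval\<close>, where \<open>f i j\<close> multiplies \<open>x ^ i * y ^ j\<close>.\<close>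

lemma bihom_eval_eq_bq_hom_eval:
  "bihom_eval P A X\<^sub>0 X\<^sub>1 Y\<^sub>0 Y\<^sub>1 n = bq_hom_eval (\<lambda>i j. zp_trunc P (A (2 - i) (2 - j))) n
      (zp_trunc P X\<^sub>0 n) (zp_trunc P X\<^sub>1 n) (zp_trunc P Y\<^sub>0 n) (zp_trunc P Y\<^sub>1 n)"
  unfolding bihom_eval_def bq_hom_eval_def by (simp add: numeral_2_eq_2 algebra_simps)

lemma bq_hom_eval_1_1: "bq_hom_eval f n x 1 y 1 = bq_eval f n x y"
  unfolding bq_hom_eval_def bq_eval_def by simp

lemma bq_hom_eval_dehomogenize:
  fixes m :: int
  assumes a: "m dvd a * a' - 1" and b: "m dvd b * b' - 1"
  shows "m dvd bq_hom_eval f n x a y b - a\<^sup>2 * b\<^sup>2 * bq_eval f n (x * a') (y * b')"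
proof -
  have "m dvd f i j n * x ^ i * a ^ (2 - i) * y ^ j * b ^ (2 - j)
      - a\<^sup>2 * b\<^sup>2 * (f i j n * (x * a') ^ i * (y * b') ^ j)" if "i \<le> 2" "j \<le> 2" for i j
  proof -
    have "a\<^sup>2 = a ^ (2 - i) * a ^ i" "b\<^sup>2 = b ^ (2 - j) * b ^ j"
      using that by (simp_all flip: power_add)
    then have "f i j n * x ^ i * a ^ (2 - i) * y ^ j * b ^ (2 - j)
        - a\<^sup>2 * b\<^sup>2 * (f i j n * (x * a') ^ i * (y * b') ^ j)
      = (f i j n * x ^ i * a ^ (2 - i) * y ^ j * b ^ (2 - j)) * (1 - (a * a') ^ i * (b * b') ^ j)"
      by (simp add: power_mult_distrib algebra_simps)
    moreover have "m dvd (a * a') ^ i * (b * b') ^ j - 1 ^ i * 1 ^ j"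
      by (intro dvd_diff_mult dvd_diff_power a b)
    then have "m dvd 1 - (a * a') ^ i * (b * b') ^ j"
      by (simp add: dvd_diff_commute)
    ultimately show ?thesis by simp
  qed
  then have "m dvd (\<Sum>i\<le>2. \<Sum>j\<le>2. f i j n * x ^ i * a ^ (2 - i) * y ^ j * b ^ (2 - j)
      - a\<^sup>2 * b\<^sup>2 * (f i j n * (x * a') ^ i * (y * b') ^ j))"
    by (intro dvd_sum) auto
  then show ?thesis
    unfolding bq_hom_eval_def bq_eval_def by (simp add: sum_subtractf sum_distrib_left)
qed

lemma bq_has_zero_of_primitive_zero:
  assumes P: "prime P" and zero: "has_primitive_zero P A"
  shows "bq_has_zero (int P) (\<lambda>i j. zp_trunc P (A (2 - i) (2 - j)))" (is "bq_has_zero ?p ?f")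
proof -
  have p: "prime ?p" using P by simp
  obtain X\<^sub>0 X\<^sub>1 Y\<^sub>0 Y\<^sub>1 where unit: "\<not> ?p dvd zp_trunc P X\<^sub>1 1 * zp_trunc P Y\<^sub>1 1"
    and z: "\<And>n. ?p ^ n dvd bihom_eval P A X\<^sub>0 X\<^sub>1 Y\<^sub>0 Y\<^sub>1 n"
    using zero unfolding has_primitive_zero_def by blast
  have unit_n: "\<not> ?p dvd zp_trunc P X\<^sub>1 n" "\<not> ?p dvd zp_trunc P Y\<^sub>1 n" if "n \<ge> 1" for n
    using unit coherent_dvd_propagate[OF coherent_zp_trunc _ that order_refl] by auto
  obtain a' where a': "coherent ?p a'" "\<And>n. ?p ^ n dvd zp_trunc P X\<^sub>1 n * a' n - 1"
    using coherent_inverse[OF p coherent_zp_trunc unit_n(1)[OF order_refl]] by blast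
  obtain b' where b': "coherent ?p b'" "\<And>n. ?p ^ n dvd zp_trunc P Y\<^sub>1 n * b' n - 1"
    using coherent_inverse[OF p coherent_zp_trunc unit_n(2)[OF order_refl]] by blast
  define x where "x n = zp_trunc P X\<^sub>0 n * a' n" for n
  define y where "y n = zp_trunc P Y\<^sub>0 n * b' n" for n
  have "?p ^ n dvd bq_eval ?f n (x n) (y n)" for n
  proof (cases "n = 0")
    case False
    define a b where "a = zp_trunc P X\<^sub>1 n" and "b = zp_trunc P Y\<^sub>1 n"
    have "?p ^ n dvd bq_hom_eval ?f n (zp_trunc P X\<^sub>0 n) a (zp_trunc P Y\<^sub>0 n) b
        - a\<^sup>2 * b\<^sup>2 * bq_eval ?f n (x n) (y n)"
      using a'(2)[of n] b'(2)[of n] unfolding a_def b_def x_def y_def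
      by (rule bq_hom_eval_dehomogenize)
    moreover have "?p ^ n dvd bq_hom_eval ?f n (zp_trunc P X\<^sub>0 n) a (zp_trunc P Y\<^sub>0 n) b"
      using z[of n] unfolding bihom_eval_eq_bq_hom_eval a_def b_def .
    ultimately have "?p ^ n dvd a\<^sup>2 * b\<^sup>2 * bq_eval ?f n (x n) (y n)"
      using dvd_diff_imp_dvd_iff by blast
    moreover have "coprime (?p ^ n) (a\<^sup>2 * b\<^sup>2)"
      using unit_n[of n] False p unfolding a_def b_def
      by (simp add: prime_imp_coprime prime_dvd_mult_iff prime_dvd_power_iff)
    ultimately show ?thesis
      using coprime_dvd_mult_right_iff by blast
  qed simp
  moreover have "coherent ?p x" "coherent ?p y"
    unfolding x_def y_def using a'(1) b'(1) by (simp_all add: coherent_mult coherent_zp_trunc)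
  ultimately show ?thesis
    unfolding bq_has_zero_def by blast
qed

lemma primitive_zero_of_bq_has_zero:
  assumes P: "prime P" and zero: "bq_has_zero (int P) (\<lambda>i j. zp_trunc P (A (2 - i) (2 - j)))"
    (is "bq_has_zero ?p ?f")
  shows "has_primitive_zero P A"
proof -
  have P1: "P > 1" using P prime_gt_1_nat by blast
  obtain x y where x: "coherent ?p x" and y: "coherent ?p y"
    and z: "\<And>n. ?p ^ n dvd bq_eval ?f n (x n) (y n)"
    using zero unfolding bq_has_zero_def by blast
  define one :: "nat \<Rightarrow> nat" where "one i = (if i = 0 then 1 else 0)" for i
  have one: "one \<in> Zp P" "zp_trunc P one n = (if n = 0 then 0 else 1)" for n
    using P1 by (auto simp: one_def Zp_def) (induction n; simp add: zp_trunc_Suc one_def)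
  have "?p ^ n dvd bihom_eval P A (digits_of P x) one (digits_of P y) one n" for n
  proof (cases "n = 0")
    case False
    then have "bihom_eval P A (digits_of P x) one (digits_of P y) one n
        = bq_eval ?f n (x n mod ?p ^ n) (y n mod ?p ^ n)"
      unfolding bihom_eval_eq_bq_hom_eval one zp_trunc_digits_of[OF P1 x] zp_trunc_digits_of[OF P1 y]
      by (simp add: bq_hom_eval_1_1)
    moreover have "?p ^ n dvd bq_eval ?f n (x n mod ?p ^ n) (y n mod ?p ^ n) - bq_eval ?f n (x n) (y n)"
      by (intro bq_eval_diff_dvd) (simp_all add: dvd_diff_commute dvd_diff_mod)
    ultimately show ?thesis
      using z[of n] dvd_diff_imp_dvd_iff by metis
  qed simp
  moreover have "\<not> ?p dvd zp_trunc P one 1 * zp_trunc P one 1"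
    using P1 one(2)[of 1] by simp
  ultimately show ?thesis
    unfolding has_primitive_zero_def using digits_of_in_Zp[OF P1] one(1) by blast
qed

text \<open>The fixed coefficients of the theorem in the index convention of \<open>bq_eval\<close>; the free
  entries are set to \<open>0\<close> and are never used.\<close>

definition fixed_part ::
  "nat \<Rightarrow> (nat \<Rightarrow> nat) \<Rightarrow> (nat \<Rightarrow> nat) \<Rightarrow> (nat \<Rightarrow> nat) \<Rightarrow> (nat \<Rightarrow> nat) \<Rightarrow> (nat \<Rightarrow> nat)
    \<Rightarrow> (nat \<Rightarrow> nat) \<Rightarrow> biquad" where
  "fixed_part P a\<^sub>0\<^sub>0 a\<^sub>0\<^sub>1 a\<^sub>0\<^sub>2 a\<^sub>1\<^sub>0 a\<^sub>1\<^sub>1 a\<^sub>2\<^sub>0 i j =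
    zp_trunc P (coef22 a\<^sub>0\<^sub>0 a\<^sub>0\<^sub>1 a\<^sub>0\<^sub>2 a\<^sub>1\<^sub>0 a\<^sub>1\<^sub>1 (\<lambda>_. 0) a\<^sub>2\<^sub>0 (\<lambda>_. 0) (\<lambda>_. 0) (2 - i) (2 - j))"

lemma admissible_fixed_part:
  assumes P: "P > 1" and a\<^sub>0\<^sub>2: "a\<^sub>0\<^sub>2 \<in> Zp P" and a\<^sub>2\<^sub>0: "a\<^sub>2\<^sub>0 \<in> Zp P"
    and v: "zp_val a\<^sub>0\<^sub>0 \<ge> 2" "zp_val a\<^sub>0\<^sub>1 \<ge> 2" "zp_val a\<^sub>0\<^sub>2 = 1"
      "zp_val a\<^sub>1\<^sub>0 \<ge> 1" "zp_val a\<^sub>1\<^sub>1 \<ge> 1" "zp_val a\<^sub>2\<^sub>0 = 0"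
  shows "admissible (int P) (fixed_part P a\<^sub>0\<^sub>0 a\<^sub>0\<^sub>1 a\<^sub>0\<^sub>2 a\<^sub>1\<^sub>0 a\<^sub>1\<^sub>1 a\<^sub>2\<^sub>0)"
proof -
  have "a\<^sub>0\<^sub>0 0 = 0" "a\<^sub>0\<^sub>0 1 = 0" "a\<^sub>0\<^sub>1 0 = 0" "a\<^sub>0\<^sub>1 1 = 0" "a\<^sub>0\<^sub>2 0 = 0" "a\<^sub>1\<^sub>0 0 = 0" "a\<^sub>1\<^sub>1 0 = 0"
    using v zp_val_ge_imp_digit_eq_0[of 2] zp_val_ge_imp_digit_eq_0[of 1]
    by (simp_all add: numeral_eq_enat one_enat_def)
  moreover have "\<not> int P dvd int (a\<^sub>2\<^sub>0 0)"
    using v(6) zp_val_eq_imp_digit_neq_0[of a\<^sub>2\<^sub>0 0] a\<^sub>2\<^sub>0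
    by (auto simp: zero_enat_def Zp_def dest: nat_dvd_not_less)
  moreover have "\<not> int P dvd int (a\<^sub>0\<^sub>2 1)"
    using v(3) zp_val_eq_imp_digit_neq_0[of a\<^sub>0\<^sub>2 1] a\<^sub>0\<^sub>2
    by (auto simp: one_enat_def Zp_def dest: nat_dvd_not_less)
  then have "\<not> (int P)\<^sup>2 dvd int (a\<^sub>0\<^sub>2 1) * int P"
    using P by (simp add: power2_eq_square)
  ultimately show ?thesis
    unfolding admissible_def fixed_part_def coef22_def
    by (simp add: coherent_zp_trunc zp_trunc_Suc numeral_2_eq_2)
qed

lemma coef22_dvd_fill_free:
  assumes "i \<le> 2" "j \<le> 2"
  shows "int P ^ n dvd zp_trunc P (coef22 a\<^sub>0\<^sub>0 a\<^sub>0\<^sub>1 a\<^sub>0\<^sub>2 a\<^sub>1\<^sub>0 a\<^sub>1\<^sub>1 (zp_mult_p c) a\<^sub>2\<^sub>0 b e (2 - i) (2 - j)) n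
    - fill_free (int P) (fixed_part P a\<^sub>0\<^sub>0 a\<^sub>0\<^sub>1 a\<^sub>0\<^sub>2 a\<^sub>1\<^sub>0 a\<^sub>1\<^sub>1 a\<^sub>2\<^sub>0) (zp_trunc P c) (zp_trunc P b)
        (zp_trunc P e) i j n"
proof -
  have "int P ^ n dvd zp_trunc P (zp_mult_p c) n - int P * zp_trunc P c n"
  proof (cases n)
    case (Suc k)
    then have "zp_trunc P (zp_mult_p c) n - int P * zp_trunc P c n = - (int (c k) * int P ^ n)"
      unfolding Suc zp_trunc_mult_p zp_trunc_Suc[of P c k] by (simp add: algebra_simps)
    then show ?thesis by simp
  qed simp
  with assms show ?thesis
    by (elim le_2_cases) (simp_all add: fill_free_simps fixed_part_def coef22_def)
qed

lemma has_primitive_zero_iff_survives: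
  fixes p :: nat
  assumes p: "prime p" and f: "admissible (int p) (fixed_part p a\<^sub>0\<^sub>0 a\<^sub>0\<^sub>1 a\<^sub>0\<^sub>2 a\<^sub>1\<^sub>0 a\<^sub>1\<^sub>1 a\<^sub>2\<^sub>0)"
  shows "has_primitive_zero p (coef22 a\<^sub>0\<^sub>0 a\<^sub>0\<^sub>1 a\<^sub>0\<^sub>2 a\<^sub>1\<^sub>0 a\<^sub>1\<^sub>1 (zp_mult_p c) a\<^sub>2\<^sub>0 b e) \<longleftrightarrow>
    (\<forall>m. survives (int p) m (fixed_part p a\<^sub>0\<^sub>0 a\<^sub>0\<^sub>1 a\<^sub>0\<^sub>2 a\<^sub>1\<^sub>0 a\<^sub>1\<^sub>1 a\<^sub>2\<^sub>0)
      (zp_trunc p c m) (zp_trunc p b m) (zp_trunc p e m))"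
proof -
  have pp: "prime (int p)" using p by simp
  have "has_primitive_zero p (coef22 a\<^sub>0\<^sub>0 a\<^sub>0\<^sub>1 a\<^sub>0\<^sub>2 a\<^sub>1\<^sub>0 a\<^sub>1\<^sub>1 (zp_mult_p c) a\<^sub>2\<^sub>0 b e) \<longleftrightarrow>
      bq_has_zero (int p) (\<lambda>i j. zp_trunc p (coef22 a\<^sub>0\<^sub>0 a\<^sub>0\<^sub>1 a\<^sub>0\<^sub>2 a\<^sub>1\<^sub>0 a\<^sub>1\<^sub>1 (zp_mult_p c) a\<^sub>2\<^sub>0 b e (2 - i) (2 - j)))"
    using bq_has_zero_of_primitive_zero[OF p] primitive_zero_of_bq_has_zero[OF p] by blast
  also have "\<dots> \<longleftrightarrow> bq_has_zero (int p) (fill_free (int p) (fixed_part p a\<^sub>0\<^sub>0 a\<^sub>0\<^sub>1 a\<^sub>0\<^sub>2 a\<^sub>1\<^sub>0 a\<^sub>1\<^sub>1 a\<^sub>2\<^sub>0)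
      (zp_trunc p c) (zp_trunc p b) (zp_trunc p e))"
    by (rule bq_has_zero_cong) (rule coef22_dvd_fill_free)
  also have "\<dots> \<longleftrightarrow> (\<forall>m. survives (int p) m (fixed_part p a\<^sub>0\<^sub>0 a\<^sub>0\<^sub>1 a\<^sub>0\<^sub>2 a\<^sub>1\<^sub>0 a\<^sub>1\<^sub>1 a\<^sub>2\<^sub>0)
      (zp_trunc p c m) (zp_trunc p b m) (zp_trunc p e m))"
    using survives_of_bq_has_zero[OF pp f coherent_zp_trunc coherent_zp_trunc coherent_zp_trunc]
      bq_has_zero_of_survives[OF pp f coherent_zp_trunc coherent_zp_trunc coherent_zp_trunc]
    by blast
  finally show ?thesis .
qed

section \<open>Haar measure of cylinder sets\<close>

lemma space_zp_haar: "space (zp_haar P) = Zp P"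
  unfolding zp_haar_def space_PiM space_uniform_count_measure Zp_def PiE_UNIV_domain Pi_def by auto

lemma prob_space_zp_haar: "P > 0 \<Longrightarrow> prob_space (zp_haar P)"
  unfolding zp_haar_def by (intro prob_space_PiM prob_space_uniform_count_measure) auto

definition zp_ball :: "nat \<Rightarrow> nat \<Rightarrow> int \<Rightarrow> (nat \<Rightarrow> nat) set" where
  "zp_ball P N s = {d \<in> Zp P. zp_trunc P d N = s}"

lemma zp_ball_eq_prod_emb:
  assumes P: "P > 1" and s: "s \<in> {0..<int P ^ N}"
  shows "zp_ball P N s = prod_emb UNIV (\<lambda>_. uniform_count_measure {0..<P}) {..<N}
    (\<Pi>\<^sub>E i\<in>{..<N}. {digits_of P (\<lambda>_. s) i})"
proof -
  define g where "g = digits_of P (\<lambda>_. s)"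
  have g: "g \<in> Zp P"
    unfolding g_def by (rule digits_of_in_Zp[OF P])
  have trunc_g: "zp_trunc P g N = s"
    unfolding g_def zp_trunc_digits_of[OF P coherent_const] using s by simp
  have iff: "zp_trunc P d N = s \<longleftrightarrow> (\<forall>i<N. d i = g i)" if d: "d \<in> Zp P" for d
  proof
    assume "zp_trunc P d N = s"
    then show "\<forall>i<N. d i = g i"
      using zp_digit_eq[OF P d] zp_digit_eq[OF P g] trunc_g by (metis of_nat_eq_iff)
  next
    assume "\<forall>i<N. d i = g i"
    then show "zp_trunc P d N = s"
      using zp_trunc_cong[of N d g P] trunc_g by simp
  qed
  have "d \<in> prod_emb UNIV (\<lambda>_. uniform_count_measure {0..<P}) {..<N} (\<Pi>\<^sub>E i\<in>{..<N}. {g i})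
      \<longleftrightarrow> d \<in> Zp P \<and> (\<forall>i<N. d i = g i)" for d
    unfolding prod_emb_def space_uniform_count_measure Zp_def PiE_UNIV_domain
    by (auto simp: PiE_iff Pi_def)
  with iff show ?thesis
    unfolding zp_ball_def g_def[symmetric] by blast
qed

lemma zp_ball_measure:
  assumes P: "P > 1" and s: "s \<in> {0..<int P ^ N}"
  shows "zp_ball P N s \<in> sets (zp_haar P)"
    and "emeasure (zp_haar P) (zp_ball P N s) = ennreal (1 / real P ^ N)"
proof -
  define g where "g = digits_of P (\<lambda>_. s)"
  have g: "g i \<in> {0..<P}" for i
    using digits_of_in_Zp[OF P] unfolding g_def Zp_def by auto
  then have g_sets: "{g i} \<in> sets (uniform_count_measure {0..<P})" for i
    by (simp add: sets_uniform_count_measure)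
  show "zp_ball P N s \<in> sets (zp_haar P)"
    unfolding zp_ball_eq_prod_emb[OF P s] zp_haar_def g_def[symmetric]
    by (rule sets_PiM_I) (use g_sets in auto)
  have "emeasure (zp_haar P) (zp_ball P N s)
      = (\<Prod>i\<in>{..<N}. emeasure (uniform_count_measure {0..<P}) {g i})"
    unfolding zp_ball_eq_prod_emb[OF P s] zp_haar_def g_def[symmetric]
    by (rule emeasure_PiM_emb) (use P g_sets in \<open>auto intro: prob_space_uniform_count_measure\<close>)
  also have "\<dots> = (\<Prod>i\<in>{..<N}. ennreal (1 / real P))"
    using g by (simp add: emeasure_uniform_count_measure)
  also have "\<dots> = ennreal (1 / real P ^ N)"
    by (simp add: ennreal_power power_one_over)
  finally show "emeasure (zp_haar P) (zp_ball P N s) = ennreal (1 / real P ^ N)" .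
qed

lemma zp_ball_cube_measure:
  assumes P: "P > 1" and stw: "s \<in> {0..<int P ^ N}" "t \<in> {0..<int P ^ N}" "w \<in> {0..<int P ^ N}"
  defines "M \<equiv> zp_haar P \<Otimes>\<^sub>M (zp_haar P \<Otimes>\<^sub>M zp_haar P)"
  shows "zp_ball P N s \<times> zp_ball P N t \<times> zp_ball P N w \<in> sets M"
    and "measure M (zp_ball P N s \<times> zp_ball P N t \<times> zp_ball P N w) = 1 / real P ^ (3 * N)"
proof -
  let ?H = "zp_haar P"
  have P0: "P > 0" using P by simp
  interpret H: prob_space ?H by (rule prob_space_zp_haar[OF P0])
  interpret HH: prob_space "?H \<Otimes>\<^sub>M ?H" by (intro prob_space_pair prob_space_zp_haar P0)
  note ball = zp_ball_measure[OF P]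
  show "zp_ball P N s \<times> zp_ball P N t \<times> zp_ball P N w \<in> sets M"
    unfolding M_def using stw ball(1) by (auto intro!: pair_measureI)
  have "emeasure (?H \<Otimes>\<^sub>M ?H) (zp_ball P N t \<times> zp_ball P N w)
      = emeasure ?H (zp_ball P N t) * emeasure ?H (zp_ball P N w)"
    using stw ball(1) by (intro H.emeasure_pair_measure_Times)
  then have "emeasure M (zp_ball P N s \<times> zp_ball P N t \<times> zp_ball P N w)
      = ennreal (1 / real P ^ N) * (ennreal (1 / real P ^ N) * ennreal (1 / real P ^ N))"
    unfolding M_def using stw ball
    by (subst HH.emeasure_pair_measure_Times) (auto intro: pair_measureI)
  then show "measure M (zp_ball P N s \<times> zp_ball P N t \<times> zp_ball P N w) = 1 / real P ^ (3 * N)"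
    by (simp add: measure_def ennreal_mult[symmetric] power_mult power_one_over mult.commute
        power3_eq_cube)
qed

lemma measure_trunc_cylinder:
  fixes P N :: nat and \<Phi> :: "int \<Rightarrow> int \<Rightarrow> int \<Rightarrow> bool"
  assumes P: "P > 1"
  defines "M \<equiv> zp_haar P \<Otimes>\<^sub>M (zp_haar P \<Otimes>\<^sub>M zp_haar P)"
  defines "S \<equiv> {\<omega> \<in> space M.
    \<Phi> (zp_trunc P (fst \<omega>) N) (zp_trunc P (fst (snd \<omega>)) N) (zp_trunc P (snd (snd \<omega>)) N)}"
  shows "S \<in> sets M"
    and "measure M S = (\<Sum>s\<in>{0..<int P ^ N}. \<Sum>t\<in>{0..<int P ^ N}. \<Sum>w\<in>{0..<int P ^ N}.
      of_bool (\<Phi> s t w)) / real P ^ (3 * N)"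
proof -
  define R where "R = {0..<int P ^ N}"
  define box where "box z = zp_ball P N (fst z) \<times> zp_ball P N (fst (snd z)) \<times> zp_ball P N (snd (snd z))"
    for z
  interpret M: prob_space M
    unfolding M_def using P by (intro prob_space_pair prob_space_zp_haar) simp_all
  have box: "box z \<in> sets M" "measure M (box z) = 1 / real P ^ (3 * N)" if "z \<in> R \<times> R \<times> R" for z
    using that zp_ball_cube_measure[OF P] unfolding box_def M_def R_def by auto
  have S_eq: "S = (\<Union>z\<in>{z \<in> R \<times> R \<times> R. \<Phi> (fst z) (fst (snd z)) (snd (snd z))}. box z)"
    using zp_trunc_range[of _ P N]
    unfolding S_def box_def zp_ball_def M_def space_pair_measure space_zp_haar R_def
    by auto
  have disjoint: "disjoint_family_on box (R \<times> R \<times> R)"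
    unfolding disjoint_family_on_def box_def zp_ball_def by auto
  show "S \<in> sets M"
    unfolding S_eq using box(1) by (intro sets.finite_UN) (auto simp: R_def)
  have "measure M S = (\<Sum>z\<in>{z \<in> R \<times> R \<times> R. \<Phi> (fst z) (fst (snd z)) (snd (snd z))}. measure M (box z))"
    unfolding S_eq using box(1) disjoint
    by (intro M.finite_measure_finite_Union) (auto simp: R_def intro: disjoint_family_on_mono)
  also have "\<dots> = (\<Sum>z\<in>R \<times> R \<times> R. of_bool (\<Phi> (fst z) (fst (snd z)) (snd (snd z)))) / real P ^ (3 * N)"
    by (simp add: box(2) sum.inter_filter[symmetric] sum_divide_distrib R_def Int_def)
  also have "\<dots> = (\<Sum>s\<in>R. \<Sum>t\<in>R. \<Sum>w\<in>R. of_bool (\<Phi> s t w)) / real P ^ (3 * N)"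
    by (simp add: sum.cartesian_product split_def)
  finally show "measure M S = (\<Sum>s\<in>{0..<int P ^ N}. \<Sum>t\<in>{0..<int P ^ N}. \<Sum>w\<in>{0..<int P ^ N}.
      of_bool (\<Phi> s t w)) / real P ^ (3 * N)"
    unfolding R_def .
qed

lemma measure_survivors:
  fixes p m :: nat and f :: biquad
  assumes p: "prime p" and f: "admissible (int p) f"
  defines "M \<equiv> zp_haar p \<Otimes>\<^sub>M (zp_haar p \<Otimes>\<^sub>M zp_haar p)"
  defines "U \<equiv> {\<omega> \<in> space M. survives (int p) m f (zp_trunc p (fst \<omega>) m)
    (zp_trunc p (fst (snd \<omega>)) m) (zp_trunc p (snd (snd \<omega>)) m)}"
  shows "U \<in> sets M" and "measure M U = 1 / 2 + 1 / 2 * (1 / real p) ^ m"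
proof -
  have p1: "p > 1" using p prime_gt_1_nat by blast
  show "U \<in> sets M"
    unfolding U_def M_def by (rule measure_trunc_cylinder(1)[OF p1])
  have "measure M U = real_of_int (survivors (int p) m f) / real p ^ (3 * m)"
    unfolding U_def M_def measure_trunc_cylinder(2)[OF p1] survivors_def by simp
  also have "real_of_int (survivors (int p) m f) = (real p ^ (3 * m) + real p ^ (2 * m)) / 2"
    using arg_cong[OF two_survivors[of "int p" f m], of real_of_int] p f by simp
  also have "(real p ^ (3 * m) + real p ^ (2 * m)) / 2 / real p ^ (3 * m) = 1 / 2 + 1 / 2 * (1 / real p) ^ m"
    using p1 by (simp add: field_simps power_mult power_one_over power2_eq_square power3_eq_cube flip: power_add)
  finally show "measure M U = 1 / 2 + 1 / 2 * (1 / real p) ^ m" .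
qed

theorem lemma4p1:
  fixes p :: nat and a00 a01 a02 a10 a11 a20 :: "nat \<Rightarrow> nat"
  assumes "prime p"
    and "a00 \<in> Zp p" "a01 \<in> Zp p" "a02 \<in> Zp p" "a10 \<in> Zp p" "a11 \<in> Zp p" "a20 \<in> Zp p"
    and "zp_val a00 \<ge> 2" "zp_val a01 \<ge> 2" "zp_val a02 = 1"
    and "zp_val a10 \<ge> 1" "zp_val a11 \<ge> 1" "zp_val a20 = 0"
  defines "M \<equiv> zp_haar p \<Otimes>\<^sub>M (zp_haar p \<Otimes>\<^sub>M zp_haar p)"
  defines "E \<equiv> {(c, b, e) \<in> space M.
                  has_primitive_zero p (coef22 a00 a01 a02 a10 a11 (zp_mult_p c) a20 b e)}"
  shows "E \<in> sets M \<and> measure M E = 1 / 2"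
proof -
  have p1: "p > 1"
    using assms(1) prime_gt_1_nat by blast
  interpret M: prob_space M
    unfolding M_def using p1 by (intro prob_space_pair prob_space_zp_haar) simp_all
  define f where "f = fixed_part p a00 a01 a02 a10 a11 a20"
  have f: "admissible (int p) f"
    unfolding f_def using assms p1 by (intro admissible_fixed_part) simp_all
  define U where "U m = {\<omega> \<in> space M. survives (int p) m f (zp_trunc p (fst \<omega>) m)
    (zp_trunc p (fst (snd \<omega>)) m) (zp_trunc p (snd (snd \<omega>)) m)}" for m
  have U: "U m \<in> sets M" "measure M (U m) = 1 / 2 + 1 / 2 * (1 / real p) ^ m" for m
    unfolding U_def M_def by (rule measure_survivors[OF assms(1) f])+
  have E: "E = (\<Inter>m. U m)"
    using has_primitive_zero_iff_survives[OF assms(1) f[unfolded f_def]]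
    by (auto simp: E_def U_def f_def)
  have "decseq U"
    unfolding decseq_Suc_iff U_def
    using survives_Suc_imp[OF _ f coherent_zp_trunc coherent_zp_trunc coherent_zp_trunc] assms(1)
    by (simp add: Collect_mono_iff)
  then have "(\<lambda>m. measure M (U m)) \<longlonglongrightarrow> measure M E"
    unfolding E using U(1) by (intro M.finite_Lim_measure_decseq) auto
  moreover have "(\<lambda>m. 1 / 2 + 1 / 2 * (1 / real p) ^ m) \<longlonglongrightarrow> 1 / 2 + 1 / 2 * 0"
    using p1 by (intro tendsto_intros LIMSEQ_power_zero) simp
  ultimately have "measure M E = 1 / 2"
    unfolding U(2) using LIMSEQ_unique by fastforce
  moreover have "E \<in> sets M"
    unfolding E using U(1) by (intro sets.countable_INT) auto
  ultimately show ?thesis by simp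
qed

end
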